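(* Let $X=\{a_1,\dots,a_\ell\}$ be a finite set of $\ell$ distinct points, let $N\ge 2$, let $c_N: X^N\to\mathbb{R}\cup\{+\infty\}$ be an arbitrary cost function, and let $\lambda_*\in\mathcal{P}(X)$. (a) The Kantorovich problem $$\text{minimize } C[\gamma]=\int_{X^N} c_N(x_1,\dots,x_N)\,d\gamma(x_1,\dots,x_N)\ \text{ over }\gamma\in\mathcal{P}_{sym}(X^N)\text{ subject to } M_1\gamma=\lambda_*$$ admits a minimizer which is an SAE state with marginal $\lambda_*$. Moreover, when $c_N$ is symmetric (i.e. invariant under permutations of its $N$ arguments), this SAE state also minimizes $C[\gamma]$ over all $\gamma\in\mathcal{P}(X^N)$ all of whose one-point marginals equal $\lambda_*$. (b) If in addition $c_N(x_1,\dots,x_N)=\sum_{1\le i<j\le N}c(x_i,x_j)$ for some $c:X\times X\to\mathbb{R}\cup\{+\infty\}$, then the minimum value of the Kantorovich problem in (a) equals the minimum of $$I[\alpha,\lambda^{(1)},\dots,\lambda^{(\ell)}]=\sum_{\nu=1}^\ell \alpha^{(\nu)}\Big(\tfrac{N^2}{2}\int_{X\times X}c(x,y)\,d\lambda^{(\nu)}(x)\,d\lambda^{(\nu)}(y)-\tfrac N2\int_X c(x,x)\,d\lambda^{(\nu)}(x)\Big)$$ over $\alpha=(\alpha^{(1)},\dots,\alpha^{(\ell)})\in\mathbb{R}^\ell$ and $\lambda^{(1)},\dots,\lambda^{(\ell)}\in\mathcal{P}_{\frac1N}(X)$ subject to $\alpha^{(\nu)}\ge 0$ for all $\nu$ and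 $\sum_{\nu=1}^\ell\alpha^{(\nu)}\lambda^{(\nu)}=\lambda_*$. Moreover, if $(\alpha,\lambda^{(1)},\dots,\lambda^{(\ell)})$ is any minimizer of this reduced problem, then $\gamma=\sum_{\nu=1}^\ell\alpha^{(\nu)}\psi_N(\lambda^{(\nu)})$ is a minimizer of the Kantorovich problem in (a).
   Context: $\mathcal{P}(X)$ denotes the probability measures on $X$ (identified with vectors $(\lambda_1,\dots,\lambda_\ell)$, $\lambda_i=\lambda(\{a_i\})$), and $\delta_i$ the Dirac measure at $a_i$. The symmetrization operator $S$ on measures on $X^N$ is $(S\gamma)(A_1\times\cdots\times A_N)=\frac1{N!}\sum_{\sigma\in S_N}\gamma(A_{\sigma(1)}\times\cdots\times A_{\sigma(N)})$; $\mathcal{P}_{sym}(X^N)$ is the set of probability measures $\gamma$ on $X^N$ with $S\gamma=\gamma$. For $\gamma\in\mathcal{P}(X^N)$, $M_1\gamma$ is its first one-point marginal, $(M_1\gamma)(A)=\gamma(A\times X^{N-1})$. $\mathcal{P}_{\frac1N}(X)=\{\lambda\in\mathcal{P}(X):\lambda_i\in\frac1N\mathbb{Z}\ \forall i\}$. For $\lambda\in\mathcal{P}_{\frac1N}(X)$, $\psi_N(\lambda)=S(\delta_{a_{i_1}}\otimes\cdots\otimes\delta_{a_{i_N}})$ where $i_1\le\dots\le i_N$ is the unique nondecreasing index sequence in which each index $i$ appears exactly $N\lambda_i$ times. An SAE state with marginal $\lambda_*$ is a probability measure on $X^N$ of the form $\gamma=\sum_{\nu=1}^\ell\alpha^{(\nu)}S(\delta_{T_1(a_\nu)}\otimes\cdots\otimes\delta_{T_N(a_\nu)})$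 for some maps $T_1,\dots,T_N:X\to X$ and weights $\alpha^{(\nu)}\ge 0$ such that $\sum_{\nu=1}^\ell\alpha^{(\nu)}\lambda^{(\nu)}=\lambda_*$, where $\lambda^{(\nu)}=\frac1N\sum_{k=1}^N\delta_{T_k(a_\nu)}$. *)

theory Defs
  imports "HOL-Analysis.Analysis" "HOL-Library.Extended_Real" "HOL-Combinatorics.Permutations"
begin

text \<open>The finite set X = {a_1,...,a_l} is the finite type 'a (l = CARD('a)); the index
  order on the points is the linear order on 'a. Points of X^N are lists of length N.
  Measures on finite sets are identified with their point-mass functions.\<close>

definition configs :: "nat \<Rightarrow> 'a list set" where
  "configs N = {xs. length xs = N}"

definition is_prob :: "('a::finite \<Rightarrow> real) \<Rightarrow> bool" where
  "is_prob lam \<longleftrightarrow> (\<forall>a. lam a \<ge> 0) \<and> (\<Sum>a\<in>UNIV. lam a) = 1"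

definition is_prob_N :: "nat \<Rightarrow> ('a::finite list \<Rightarrow> real) \<Rightarrow> bool" where
  "is_prob_N N \<gamma> \<longleftrightarrow> (\<forall>xs. \<gamma> xs \<ge> 0) \<and> (\<forall>xs. length xs \<noteq> N \<longrightarrow> \<gamma> xs = 0)
     \<and> (\<Sum>xs\<in>configs N. \<gamma> xs) = 1"

definition perm_config :: "(nat \<Rightarrow> nat) \<Rightarrow> 'a list \<Rightarrow> 'a list" where
  "perm_config \<sigma> xs = map (\<lambda>i. xs ! \<sigma> i) [0..<length xs]"

definition symmetrize :: "nat \<Rightarrow> ('a list \<Rightarrow> real) \<Rightarrow> 'a list \<Rightarrow> real" where
  "symmetrize N \<gamma> xs = (if length xs = N then
     (1 / fact N) * (\<Sum>\<sigma>\<in>{\<sigma>. \<sigma> permutes {0..<N}}. \<gamma> (perm_config \<sigma> xs)) else 0)"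

definition sym_prob :: "nat \<Rightarrow> ('a::finite list \<Rightarrow> real) \<Rightarrow> bool" where
  "sym_prob N \<gamma> \<longleftrightarrow> is_prob_N N \<gamma> \<and> symmetrize N \<gamma> = \<gamma>"

text \<open>k-th one-point marginal (k = 0 is the first one, M_1)\<close>
definition marg :: "nat \<Rightarrow> nat \<Rightarrow> ('a::finite list \<Rightarrow> real) \<Rightarrow> 'a \<Rightarrow> real" where
  "marg N k \<gamma> a = (\<Sum>xs\<in>{xs\<in>configs N. xs ! k = a}. \<gamma> xs)"

text \<open>C[gamma] = integral of the cost (values in R \<union> {+\<infinity>}, convention 0 * \<infinity> = 0)\<close>
definition cost :: "nat \<Rightarrow> ('a::finite list \<Rightarrow> ereal) \<Rightarrow> ('a list \<Rightarrow> real) \<Rightarrow> ereal" where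
  "cost N cN \<gamma> = (\<Sum>xs\<in>configs N. ereal (\<gamma> xs) * cN xs)"

definition dirac_cfg :: "'a list \<Rightarrow> 'a list \<Rightarrow> real" where
  "dirac_cfg ys xs = (if xs = ys then 1 else 0)"

definition emp :: "nat \<Rightarrow> (nat \<Rightarrow> 'a \<Rightarrow> 'a) \<Rightarrow> 'a \<Rightarrow> 'a \<Rightarrow> real" where
  "emp N T \<nu> a = (1 / real N) * real (card {k. k < N \<and> T k \<nu> = a})"

text \<open>SAE state with marginal lam (maps T_1..T_N are T 0 .. T (N-1))\<close>
definition SAE :: "nat \<Rightarrow> ('a::finite \<Rightarrow> real) \<Rightarrow> ('a list \<Rightarrow> real) \<Rightarrow> bool" where
  "SAE N lam \<gamma> \<longleftrightarrow> (\<exists>(T :: nat \<Rightarrow> 'a \<Rightarrow> 'a) (\<alpha> :: 'a \<Rightarrow> real).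
     (\<forall>\<nu>. \<alpha> \<nu> \<ge> 0) \<and>
     (\<forall>a. (\<Sum>\<nu>\<in>UNIV. \<alpha> \<nu> * emp N T \<nu> a) = lam a) \<and>
     \<gamma> = (\<lambda>xs. \<Sum>\<nu>\<in>UNIV. \<alpha> \<nu> * symmetrize N (dirac_cfg (map (\<lambda>k. T k \<nu>) [0..<N])) xs))"

definition kant_adm :: "nat \<Rightarrow> ('a::finite \<Rightarrow> real) \<Rightarrow> ('a list \<Rightarrow> real) \<Rightarrow> bool" where
  "kant_adm N lam \<gamma> \<longleftrightarrow> sym_prob N \<gamma> \<and> marg N 0 \<gamma> = lam"

definition kant_min :: "nat \<Rightarrow> ('a::finite list \<Rightarrow> ereal) \<Rightarrow> ('a \<Rightarrow> real) \<Rightarrow> ('a list \<Rightarrow> real) \<Rightarrow> bool" where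
  "kant_min N cN lam \<gamma> \<longleftrightarrow> kant_adm N lam \<gamma> \<and>
     (\<forall>\<gamma>'. kant_adm N lam \<gamma>' \<longrightarrow> cost N cN \<gamma> \<le> cost N cN \<gamma>')"

definition prob_1N :: "nat \<Rightarrow> ('a::finite \<Rightarrow> real) \<Rightarrow> bool" where
  "prob_1N N lam \<longleftrightarrow> is_prob lam \<and> (\<forall>a. real N * lam a \<in> \<int>)"

definition psi :: "nat \<Rightarrow> ('a::{finite,linorder} \<Rightarrow> real) \<Rightarrow> 'a list \<Rightarrow> real" where
  "psi N lam = symmetrize N (dirac_cfg
     (THE ys. sorted ys \<and> (\<forall>a. real (count_list ys a) = real N * lam a)))"

text \<open>reduced functional I; the two integrals are combined into one sum with coefficient
  N^2/2 lam(x) lam(y) - [x=y] N/2 lam(x) in front of c(x,y) (avoids \<infinity> - \<infinity>)\<close>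
definition I_red :: "nat \<Rightarrow> ('a::finite \<Rightarrow> 'a \<Rightarrow> ereal) \<Rightarrow> ('a \<Rightarrow> real) \<Rightarrow> ('a \<Rightarrow> 'a \<Rightarrow> real) \<Rightarrow> ereal" where
  "I_red N c \<alpha> \<Lambda> = (\<Sum>\<nu>\<in>UNIV. ereal (\<alpha> \<nu>) *
     (\<Sum>x\<in>UNIV. \<Sum>y\<in>UNIV.
        ereal ((real N)^2 / 2 * \<Lambda> \<nu> x * \<Lambda> \<nu> y - (if x = y then real N / 2 * \<Lambda> \<nu> x else 0)) * c x y))"

definition red_adm :: "nat \<Rightarrow> ('a::finite \<Rightarrow> real) \<Rightarrow> ('a \<Rightarrow> real) \<Rightarrow> ('a \<Rightarrow> 'a \<Rightarrow> real) \<Rightarrow> bool" where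
  "red_adm N lam \<alpha> \<Lambda> \<longleftrightarrow> (\<forall>\<nu>. \<alpha> \<nu> \<ge> 0) \<and> (\<forall>\<nu>. prob_1N N (\<Lambda> \<nu>)) \<and>
     (\<forall>a. (\<Sum>\<nu>\<in>UNIV. \<alpha> \<nu> * \<Lambda> \<nu> a) = lam a)"

definition red_min :: "nat \<Rightarrow> ('a::finite \<Rightarrow> 'a \<Rightarrow> ereal) \<Rightarrow> ('a \<Rightarrow> real) \<Rightarrow> ('a \<Rightarrow> real) \<Rightarrow> ('a \<Rightarrow> 'a \<Rightarrow> real) \<Rightarrow> bool" where
  "red_min N c lam \<alpha> \<Lambda> \<longleftrightarrow> red_adm N lam \<alpha> \<Lambda> \<and>
     (\<forall>\<alpha>' \<Lambda>'. red_adm N lam \<alpha>' \<Lambda>' \<longrightarrow> I_red N c \<alpha> \<Lambda> \<le> I_red N c \<alpha>' \<Lambda>')"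

end

theory Submission
  imports Defs
begin

text \<open>A symmetric state \<open>\<gamma>\<close> is the mixture \<open>\<Sum>ys. \<gamma> ys * sym_dirac N ys\<close> of the symmetrized
  Diracs of its own configurations, and the first marginal of \<open>sym_dirac N ys\<close> is the empirical
  measure of \<open>ys\<close>. So the Kantorovich problem is a linear program in nonnegative weights on
  configurations, with one equality constraint per point of X. Moving along a linear dependence
  between the empirical measures of the support shrinks the support without increasing the
  cost; hence a minimizer is supported on configurations with linearly independent empirical
  measures, i.e. on at most \<open>CARD('a)\<close> of them, and relabelling them by X gives an SAE state.
  For a symmetric cost, symmetrizing a state whose marginals are all \<open>lam\<close> keeps its cost. For a
  pair cost, the cost of \<open>sym_dirac N ys\<close> depends only on the empirical measure of \<open>ys\<close> and is
  the integrand of \<open>I_red\<close>, which identifies the two problems.\<close>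

section \<open>Configurations and symmetrization\<close>

lemma finite_configs [simp]: "finite (configs N :: 'a::finite list set)"
proof -
  have "configs N = {xs::'a list. set xs \<subseteq> UNIV \<and> length xs = N}" by (auto simp: configs_def)
  then show ?thesis using finite_lists_length_eq[of "UNIV::'a set" N] by simp
qed

lemma in_configs [simp]: "xs \<in> configs N \<longleftrightarrow> length xs = N"
  by (simp add: configs_def)

lemma length_perm_config [simp]: "length (perm_config \<sigma> xs) = length xs"
  by (simp add: perm_config_def)

lemma nth_perm_config: "i < length xs \<Longrightarrow> perm_config \<sigma> xs ! i = xs ! \<sigma> i"
  by (simp add: perm_config_def)

lemma perm_config_id [simp]: "perm_config id xs = xs"
  by (rule nth_equalityI) (auto simp: nth_perm_config)

lemma perm_config_comp:
  assumes "\<sigma> permutes {0..<length xs}"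
  shows "perm_config \<sigma> (perm_config \<tau> xs) = perm_config (\<tau> \<circ> \<sigma>) xs"
proof (rule nth_equalityI)
  fix i assume i: "i < length (perm_config \<sigma> (perm_config \<tau> xs))"
  then have "\<sigma> i < length xs" using permutes_in_image[OF assms] by simp
  then show "perm_config \<sigma> (perm_config \<tau> xs) ! i = perm_config (\<tau> \<circ> \<sigma>) xs ! i"
    using i by (simp add: nth_perm_config)
qed simp

lemma perm_config_inv_perm_config:
  assumes "\<sigma> permutes {0..<N}" "length xs = N"
  shows "perm_config (inv \<sigma>) (perm_config \<sigma> xs) = xs"
  using assms perm_config_comp[of "inv \<sigma>" xs \<sigma>] by (simp add: permutes_inv permutes_inv_o(1))

lemma perm_config_perm_config_inv:
  assumes "\<sigma> permutes {0..<N}" "length xs = N"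
  shows "perm_config \<sigma> (perm_config (inv \<sigma>) xs) = xs"
  using assms perm_config_comp[of \<sigma> xs "inv \<sigma>"] by (simp add: permutes_inv_o(2))

lemma perm_config_eq_iff:
  assumes "\<sigma> permutes {0..<N}" "length xs = N" "length ys = N"
  shows "perm_config \<sigma> xs = ys \<longleftrightarrow> xs = perm_config (inv \<sigma>) ys"
  using assms perm_config_inv_perm_config perm_config_perm_config_inv by metis

lemma bij_betw_perm_config:
  assumes "\<sigma> permutes {0..<N}"
  shows "bij_betw (perm_config \<sigma>) (configs N) (configs N)"
  by (rule bij_betw_byWitness[where f'="perm_config (inv \<sigma>)"])
    (auto simp: perm_config_inv_perm_config[OF assms] perm_config_perm_config_inv[OF assms])

lemma finite_permutes_atLeastLessThan [simp]: "finite {\<sigma>. \<sigma> permutes {0..<(N::nat)}}"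
  by (rule finite_permutations) simp

lemma card_permutes_atLeastLessThan [simp]: "card {\<sigma>. \<sigma> permutes {0..<(N::nat)}} = fact N"
  by (simp add: card_permutations)

lemma sum_permutes_at_0:
  fixes f :: "nat \<Rightarrow> 'b::{comm_semiring_1,semiring_char_0}"
  assumes "N \<ge> 1"
  shows "(\<Sum>\<sigma>\<in>{\<sigma>. \<sigma> permutes {0..<N}}. f (\<sigma> 0)) = fact (N - 1) * (\<Sum>b<N. f b)"
proof -
  have eq: "{0..<N} = insert 0 {1..<N}" "insert 0 {1..<N} = {..<N}" using assms by auto
  have "(\<Sum>\<sigma>\<in>{\<sigma>. \<sigma> permutes {0..<N}}. f (\<sigma> 0)) =
     (\<Sum>b\<in>insert 0 {1..<N}. \<Sum>q\<in>{q. q permutes {1..<N}}. f ((Transposition.transpose 0 b \<circ> q) 0))"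
    unfolding eq(1) by (rule sum_over_permutations_insert) auto
  also have "\<dots> = (\<Sum>b\<in>insert 0 {1..<N}. \<Sum>q\<in>{q. q permutes {1..<N}}. f b)"
    by (intro sum.cong refl) (auto simp: permutes_not_in)
  also have "\<dots> = fact (N - 1) * (\<Sum>b<N. f b)"
    unfolding eq(2) by (simp add: card_permutations sum_distrib_left)
  finally show ?thesis .
qed

lemma symmetrize_sum:
  "symmetrize N (\<lambda>xs. \<Sum>i\<in>I. \<alpha> i * g i xs) = (\<lambda>xs. \<Sum>i\<in>I. \<alpha> i * symmetrize N (g i) xs)"
  by (rule ext) (simp add: symmetrize_def sum_distrib_left mult_ac sum.swap[of _ "{\<sigma>. \<sigma> permutes {0..<N}}"])

lemma symmetrize_idem: "symmetrize N (symmetrize N \<gamma>) = symmetrize N \<gamma>"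
proof (rule ext)
  fix xs :: "'a list"
  let ?P = "{\<sigma>. \<sigma> permutes {0..<N}}"
  show "symmetrize N (symmetrize N \<gamma>) xs = symmetrize N \<gamma> xs"
  proof (cases "length xs = N")
    case True
    have inner: "(\<Sum>\<tau>\<in>?P. \<gamma> (perm_config (\<sigma> \<circ> \<tau>) xs)) = (\<Sum>\<tau>\<in>?P. \<gamma> (perm_config \<tau> xs))"
      if "\<sigma> \<in> ?P" for \<sigma>
      using setum_permutations_compose_left[of \<sigma> "{0..<N}" "\<lambda>\<tau>. \<gamma> (perm_config \<tau> xs)"] that by simp
    have "symmetrize N (symmetrize N \<gamma>) xs =
      1 / fact N * (\<Sum>\<sigma>\<in>?P. 1 / fact N * (\<Sum>\<tau>\<in>?P. \<gamma> (perm_config (\<sigma> \<circ> \<tau>) xs)))"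
      using True by (auto simp: symmetrize_def perm_config_comp intro!: sum.cong)
    also have "\<dots> = 1 / fact N * (\<Sum>\<sigma>\<in>?P. 1 / fact N * (\<Sum>\<tau>\<in>?P. \<gamma> (perm_config \<tau> xs)))"
      using inner by (auto intro!: sum.cong)
    also have "\<dots> = symmetrize N \<gamma> xs"
      using True by (simp add: symmetrize_def)
    finally show ?thesis .
  qed (simp add: symmetrize_def)
qed

lemma sum_symmetrize:
  fixes \<gamma> :: "'a::finite list \<Rightarrow> real"
  shows "(\<Sum>xs\<in>configs N. symmetrize N \<gamma> xs) = (\<Sum>xs\<in>configs N. \<gamma> xs)"
proof -
  let ?P = "{\<sigma>. \<sigma> permutes {0..<N}}"
  have inner: "(\<Sum>xs\<in>configs N. \<gamma> (perm_config \<sigma> xs)) = (\<Sum>xs\<in>configs N. \<gamma> xs)"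
    if "\<sigma> \<in> ?P" for \<sigma>
    using sum.reindex_bij_betw[OF bij_betw_perm_config[of \<sigma> N], of \<gamma>] that by simp
  have "(\<Sum>xs\<in>configs N. symmetrize N \<gamma> xs) = 1 / fact N * (\<Sum>\<sigma>\<in>?P. \<Sum>xs\<in>configs N. \<gamma> (perm_config \<sigma> xs))"
    by (simp add: symmetrize_def sum_distrib_left sum.swap[of _ "configs N"])
  also have "\<dots> = 1 / fact N * (\<Sum>\<sigma>\<in>?P. \<Sum>xs\<in>configs N. \<gamma> xs)"
    using inner by (auto intro!: sum.cong)
  finally show ?thesis by simp
qed

section \<open>Symmetrized Diracs, empirical measures and costs\<close>

definition sym_dirac :: "nat \<Rightarrow> 'a list \<Rightarrow> 'a list \<Rightarrow> real" where
  "sym_dirac N ys = symmetrize N (dirac_cfg ys)"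

definition empirical :: "nat \<Rightarrow> 'a list \<Rightarrow> 'a \<Rightarrow> real" where
  "empirical N ys a = real (count_list ys a) / real N"

lemma sym_dirac_nonneg: "sym_dirac N ys xs \<ge> 0"
  unfolding sym_dirac_def symmetrize_def dirac_cfg_def by (auto intro!: divide_nonneg_nonneg sum_nonneg)

lemma sym_dirac_eq_0: "length xs \<noteq> N \<Longrightarrow> sym_dirac N ys xs = 0"
  by (simp add: sym_dirac_def symmetrize_def)

lemma symmetrize_sym_dirac [simp]: "symmetrize N (sym_dirac N ys) = sym_dirac N ys"
  by (simp add: sym_dirac_def symmetrize_idem)

lemma sym_dirac_eq:
  assumes "length ys = N"
  shows "sym_dirac N ys xs = (if length xs = N then
     (\<Sum>\<sigma>\<in>{\<sigma>. \<sigma> permutes {0..<N}}. if xs = perm_config (inv \<sigma>) ys then 1 / fact N else 0) else 0)"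
  using assms by (auto simp: sym_dirac_def symmetrize_def dirac_cfg_def sum_distrib_left perm_config_eq_iff
      intro!: sum.cong)

lemma sum_sym_dirac:
  fixes ys :: "'a::finite list"
  assumes "length ys = N"
  shows "(\<Sum>xs\<in>configs N. sym_dirac N ys xs) = 1"
  using assms by (simp add: sym_dirac_def sum_symmetrize dirac_cfg_def)

lemma symmetrize_eq_sum_sym_dirac:
  fixes \<gamma> :: "'a::finite list \<Rightarrow> real"
  shows "symmetrize N \<gamma> = (\<lambda>xs. \<Sum>ys\<in>configs N. \<gamma> ys * sym_dirac N ys xs)"
proof (rule ext)
  fix xs :: "'a list"
  show "symmetrize N \<gamma> xs = (\<Sum>ys\<in>configs N. \<gamma> ys * sym_dirac N ys xs)"
  proof (cases "length xs = N")
    case True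
    have "(\<Sum>ys\<in>configs N. \<gamma> ys * sym_dirac N ys xs) = 1 / fact N *
        (\<Sum>\<sigma>\<in>{\<sigma>. \<sigma> permutes {0..<N}}. \<Sum>ys\<in>configs N. \<gamma> ys * dirac_cfg ys (perm_config \<sigma> xs))"
      using True by (simp add: sym_dirac_def symmetrize_def sum_distrib_left mult_ac sum.swap[of _ "configs N"])
    also have "\<dots> = 1 / fact N * (\<Sum>\<sigma>\<in>{\<sigma>. \<sigma> permutes {0..<N}}. \<gamma> (perm_config \<sigma> xs))"
      using True by (intro arg_cong2[where f="(*)"] refl sum.cong)
        (simp add: dirac_cfg_def if_distrib cong: if_cong)
    finally show ?thesis using True by (simp add: symmetrize_def)
  qed (simp add: symmetrize_def sym_dirac_eq_0)
qed

lemma count_list_eq_card: "count_list ys a = card {k. k < length ys \<and> ys ! k = a}"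
  by (simp add: count_list_eq_length_filter length_filter_conv_card eq_commute)

lemma sum_empirical:
  "length ys = N \<Longrightarrow> N \<ge> 1 \<Longrightarrow> (\<Sum>a\<in>UNIV. empirical N (ys::'a::finite list) a) = 1"
  using sum_count_set[of ys UNIV]
  by (simp add: empirical_def flip: sum_divide_distrib of_nat_sum)

lemma marg_sum: "marg N k (\<lambda>xs. \<Sum>i\<in>I. \<alpha> i * g i xs) a = (\<Sum>i\<in>I. \<alpha> i * marg N k (g i) a)"
  unfolding marg_def by (simp add: sum_distrib_left sum.swap[of _ I])

lemma marg_sym_dirac:
  assumes ys: "length ys = N" and N: "N \<ge> 1"
  shows "marg N 0 (sym_dirac N ys) a = empirical N ys a"
proof -
  let ?P = "{\<sigma>. \<sigma> permutes {0..<N}}"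
  let ?C = "{xs\<in>configs N. xs ! 0 = a}"
  let ?f = "\<lambda>b. if ys ! b = a then 1 / fact N else (0::real)"
  have finC: "finite ?C" by (rule finite_subset[OF _ finite_configs[of N]]) auto
  have inner: "(\<Sum>xs\<in>?C. if xs = perm_config (inv \<sigma>) ys then 1 / fact N else 0) = ?f (inv \<sigma> 0)"
    if "\<sigma> \<in> ?P" for \<sigma>
    using ys N by (subst sum.delta[OF finC]) (auto simp: nth_perm_config)
  have "marg N 0 (sym_dirac N ys) a =
      (\<Sum>xs\<in>?C. \<Sum>\<sigma>\<in>?P. if xs = perm_config (inv \<sigma>) ys then 1 / fact N else 0)"
    unfolding marg_def by (intro sum.cong refl) (auto simp: sym_dirac_eq[OF ys])
  also have "\<dots> = (\<Sum>\<sigma>\<in>?P. ?f (inv \<sigma> 0))"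
    by (subst sum.swap) (rule sum.cong[OF refl inner])
  also have "\<dots> = (\<Sum>\<sigma>\<in>?P. ?f (\<sigma> 0))"
    by (rule sum_permutations_inverse[symmetric])
  also have "\<dots> = fact (N - 1) * (\<Sum>b\<in>{b. b < N \<and> ys ! b = a}. 1 / fact N)"
    by (subst sum_permutes_at_0[OF N]) (simp add: sum.inter_filter[symmetric] lessThan_def conj_commute)
  also have "fact N = real N * (fact (N - 1) :: real)"
    using N by (subst fact_reduce) auto
  finally show ?thesis using ys N by (simp add: empirical_def count_list_eq_card)
qed

lemma ereal_sum_times:
  "(\<And>i. i \<in> A \<Longrightarrow> a i \<ge> 0) \<Longrightarrow> ereal (\<Sum>i\<in>A. a i) * x = (\<Sum>i\<in>A. ereal (a i) * x)"
  using sum_ereal_left_distrib[of A "\<lambda>i. ereal (a i)" x] by simp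

lemma ereal_times_sum: "r \<ge> 0 \<Longrightarrow> ereal r * sum f A = (\<Sum>i\<in>A. ereal r * f i)"
  using sum_distrib_right_ereal[of r f A] by (simp add: mult.commute)

lemma cost_sum:
  fixes g :: "'i \<Rightarrow> 'a::finite list \<Rightarrow> real"
  assumes "\<And>i. i \<in> I \<Longrightarrow> \<alpha> i \<ge> 0" "\<And>i xs. g i xs \<ge> 0"
  shows "cost N cN (\<lambda>xs. \<Sum>i\<in>I. \<alpha> i * g i xs) = (\<Sum>i\<in>I. ereal (\<alpha> i) * cost N cN (g i))"
proof -
  have "cost N cN (\<lambda>xs. \<Sum>i\<in>I. \<alpha> i * g i xs) = (\<Sum>xs\<in>configs N. \<Sum>i\<in>I. ereal (\<alpha> i * g i xs) * cN xs)"
    unfolding cost_def using assms by (intro sum.cong refl ereal_sum_times) auto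
  also have "\<dots> = (\<Sum>i\<in>I. \<Sum>xs\<in>configs N. ereal (\<alpha> i) * (ereal (g i xs) * cN xs))"
    by (subst sum.swap) (simp add: mult.assoc[symmetric])
  also have "\<dots> = (\<Sum>i\<in>I. ereal (\<alpha> i) * cost N cN (g i))"
    unfolding cost_def using assms by (intro sum.cong refl ereal_times_sum[symmetric]) auto
  finally show ?thesis .
qed

lemma cost_sym_dirac:
  assumes ys: "length ys = N"
  shows "cost N cN (sym_dirac N ys) =
    (\<Sum>\<sigma>\<in>{\<sigma>. \<sigma> permutes {0..<N}}. ereal (1 / fact N) * cN (perm_config \<sigma> ys))"
proof -
  let ?P = "{\<sigma>. \<sigma> permutes {0..<N}}"
  have "cost N cN (sym_dirac N ys) = (\<Sum>xs\<in>configs N. \<Sum>\<sigma>\<in>?P.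
      ereal (if xs = perm_config (inv \<sigma>) ys then 1 / fact N else 0) * cN xs)"
    unfolding cost_def by (intro sum.cong refl, subst sym_dirac_eq[OF ys]) (auto intro!: ereal_sum_times)
  also have "\<dots> = (\<Sum>\<sigma>\<in>?P. \<Sum>xs\<in>configs N.
      if xs = perm_config (inv \<sigma>) ys then ereal (1 / fact N) * cN xs else 0)"
    by (subst sum.swap) (intro sum.cong refl, auto)
  also have "\<dots> = (\<Sum>\<sigma>\<in>?P. ereal (1 / fact N) * cN (perm_config (inv \<sigma>) ys))"
    by (intro sum.cong refl, subst sum.delta) (auto simp: ys)
  also have "\<dots> = (\<Sum>\<sigma>\<in>?P. ereal (1 / fact N) * cN (perm_config \<sigma> ys))"
    by (rule sum_permutations_inverse[symmetric])
  finally show ?thesis .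
qed

lemma cost_sym_dirac_symmetric:
  assumes ys: "length ys = N"
    and symc: "\<forall>\<sigma> xs. \<sigma> permutes {0..<N} \<and> length xs = N \<longrightarrow> cN (perm_config \<sigma> xs) = cN xs"
  shows "cost N cN (sym_dirac N ys) = cN ys"
proof -
  have "cost N cN (sym_dirac N ys) = ereal (\<Sum>\<sigma>\<in>{\<sigma>. \<sigma> permutes {0..<N}}. 1 / fact N) * cN ys"
    unfolding cost_sym_dirac[OF ys] using symc ys by (subst ereal_sum_times) auto
  then show ?thesis by simp
qed

lemma cost_not_minf:
  assumes "\<And>xs. cN xs \<noteq> -\<infinity>" "\<And>xs. \<gamma> xs \<ge> 0"
  shows "cost N cN \<gamma> \<noteq> -\<infinity>"
proof -
  have "ereal (\<gamma> xs) * cN xs \<noteq> -\<infinity>" for xs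
    using assms(1)[of xs] assms(2)[of xs] by (cases "cN xs") (auto simp: ereal_mult_eq_MInfty)
  then have "(\<Sum>xs\<in>A. ereal (\<gamma> xs) * cN xs) \<noteq> -\<infinity>" for A
    by (induction A rule: infinite_finite_induct) auto
  then show ?thesis unfolding cost_def .
qed

section \<open>The linear program over configuration weights\<close>

definition config_weights :: "nat \<Rightarrow> ('a::finite \<Rightarrow> real) \<Rightarrow> ('a list \<Rightarrow> real) \<Rightarrow> bool" where
  "config_weights N lam w \<longleftrightarrow> (\<forall>ys. w ys \<ge> 0) \<and> (\<forall>ys. length ys \<noteq> N \<longrightarrow> w ys = 0) \<and>
     (\<forall>a. (\<Sum>ys\<in>configs N. w ys * empirical N ys a) = lam a)"

definition weighted_cost :: "nat \<Rightarrow> ('a::finite list \<Rightarrow> ereal) \<Rightarrow> ('a list \<Rightarrow> real) \<Rightarrow> ereal" where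
  "weighted_cost N K w = (\<Sum>ys\<in>configs N. ereal (w ys) * K ys)"

definition weight_support :: "nat \<Rightarrow> ('a list \<Rightarrow> real) \<Rightarrow> 'a list set" where
  "weight_support N w = {ys\<in>configs N. w ys \<noteq> 0}"

definition empirically_independent :: "nat \<Rightarrow> 'a::finite list set \<Rightarrow> bool" where
  "empirically_independent N S \<longleftrightarrow>
     (\<forall>d. (\<forall>a. (\<Sum>ys\<in>S. d ys * empirical N ys a) = 0) \<longrightarrow> (\<forall>ys\<in>S. d ys = 0))"

lemma weight_support_subset: "weight_support N w \<subseteq> configs N"
  by (auto simp: weight_support_def)

lemma finite_weight_support [simp]: "finite (weight_support N (w :: 'a::finite list \<Rightarrow> real))"
  using finite_subset[OF weight_support_subset finite_configs] .

lemma config_weights_eq_0: "config_weights N lam w \<Longrightarrow> ys \<notin> weight_support N w \<Longrightarrow> w ys = 0"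
  by (cases "length ys = N") (auto simp: config_weights_def weight_support_def)

lemma sum_configs_eq_sum_superset_support:
  fixes w :: "'a::finite list \<Rightarrow> real"
  assumes "config_weights N lam w" "weight_support N w \<subseteq> S" "S \<subseteq> configs N" "\<And>ys. f 0 ys = 0"
  shows "(\<Sum>ys\<in>configs N. f (w ys) ys) = (\<Sum>ys\<in>S. f (w ys) ys)"
proof (rule sum.mono_neutral_right)
  show "\<forall>ys\<in>configs N - S. f (w ys) ys = 0"
  proof
    fix ys assume "ys \<in> configs N - S"
    then have "w ys = 0" using assms(2) by (intro config_weights_eq_0[OF assms(1)]) auto
    then show "f (w ys) ys = 0" using assms(4) by simp
  qed
qed (use assms(3) in auto)

lemma weighted_cost_eq_sum:
  fixes w :: "'a::finite list \<Rightarrow> real"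
  assumes "config_weights N lam w" "weight_support N w \<subseteq> S" "S \<subseteq> configs N"
  shows "weighted_cost N K w = (\<Sum>ys\<in>S. ereal (w ys) * K ys)"
  unfolding weighted_cost_def
  by (rule sum_configs_eq_sum_superset_support[OF assms]) (simp add: zero_ereal_def[symmetric])

lemma exists_neg_of_sum_eq_0:
  fixes d :: "'b \<Rightarrow> real"
  assumes "finite S" "(\<Sum>y\<in>S. d y) = 0" "y0 \<in> S" "d y0 \<noteq> 0"
  shows "\<exists>y\<in>S. d y < 0"
proof (rule ccontr)
  assume "\<not> ?thesis"
  then have "\<And>y. y \<in> S \<Longrightarrow> d y \<ge> 0" by (simp add: not_less)
  then show False using sum_nonneg_eq_0_iff[of S d] assms by blast
qed

lemma exists_descent_direction:
  fixes S :: "'a::finite list set"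
  assumes N: "N \<ge> 1" and S: "S \<subseteq> configs N" and dep: "\<not> empirically_independent N S"
  shows "\<exists>d. (\<forall>a. (\<Sum>ys\<in>S. d ys * empirical N ys a) = 0) \<and> (\<exists>y\<in>S. d y < 0) \<and>
             (\<Sum>ys\<in>S. d ys * R ys) \<le> 0"
proof -
  have finS: "finite S" using finite_subset[OF S finite_configs] .
  obtain d0 y0 where d0: "\<And>a. (\<Sum>ys\<in>S. d0 ys * empirical N ys a) = 0" and y0: "y0 \<in> S" "d0 y0 \<noteq> 0"
    using dep unfolding empirically_independent_def by blast
  have "(\<Sum>ys\<in>S. d0 ys) = (\<Sum>ys\<in>S. d0 ys * (\<Sum>a\<in>UNIV. empirical N ys a))"
    using N S by (intro sum.cong refl) (auto simp: sum_empirical)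
  also have "\<dots> = 0"
    by (simp add: sum_distrib_left d0 flip: sum.swap[of _ S])
  finally have sum0: "(\<Sum>ys\<in>S. d0 ys) = 0" .
  show ?thesis
  proof (cases "(\<Sum>ys\<in>S. d0 ys * R ys) \<le> 0")
    case True
    then show ?thesis using d0 exists_neg_of_sum_eq_0[OF finS sum0 y0] by blast
  next
    case False
    have "\<exists>y\<in>S. - d0 y < 0"
      by (rule exists_neg_of_sum_eq_0[OF finS]) (use sum0 y0 in \<open>simp_all add: sum_negf\<close>)
    moreover have "(\<Sum>ys\<in>S. - d0 ys * empirical N ys a) = 0" for a
      using d0[of a] by (simp add: sum_negf)
    ultimately show ?thesis
      using False by (intro exI[of _ "\<lambda>ys. - d0 ys"]) (auto simp: sum_negf)
  qed
qed

lemma exists_maximal_step: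
  fixes d w :: "'b \<Rightarrow> real"
  assumes "finite S" "y1 \<in> S" "d y1 < 0" and wpos: "\<And>ys. ys \<in> S \<Longrightarrow> w ys > 0"
  shows "\<exists>t>0. (\<forall>ys\<in>S. 0 \<le> w ys + t * d ys) \<and> (\<exists>ym\<in>S. w ym + t * d ym = 0)"
proof -
  define Neg where "Neg = {ys\<in>S. d ys < 0}"
  define r where "r ys = w ys / (- d ys)" for ys
  have finN: "finite Neg" "Neg \<noteq> {}" using assms by (auto simp: Neg_def)
  have "Min (r ` Neg) \<in> r ` Neg" using finN by (intro Min_in) auto
  then obtain ym where ym: "ym \<in> Neg" "r ym = Min (r ` Neg)" by auto
  have tle: "r ym \<le> r ys" if "ys \<in> Neg" for ys using that finN ym by simp
  have "r ym > 0" using ym(1) wpos by (auto simp: Neg_def r_def divide_pos_neg)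
  moreover have "0 \<le> w ys + r ym * d ys" if "ys \<in> S" for ys
  proof (cases "d ys < 0")
    case True
    have "r ym \<le> w ys / (- d ys)" using tle[of ys] that True unfolding Neg_def r_def[of ys] by simp
    then have "r ym * (- d ys) \<le> w ys" by (rule pos_le_divide_eq[THEN iffD1, rotated]) (use True in simp)
    then show ?thesis by simp
  next
    case False
    then show ?thesis using \<open>r ym > 0\<close> wpos[OF that] by simp
  qed
  moreover have "w ym + r ym * d ym = 0" using ym(1) by (simp add: Neg_def r_def[of ym])
  ultimately show ?thesis using ym by (auto simp: Neg_def)
qed

lemma weighted_cost_along_direction:
  fixes w w' :: "'a::finite list \<Rightarrow> real"
  assumes w: "config_weights N lam w" and w': "config_weights N lam w'"
    and S: "S = weight_support N w" and sub: "weight_support N w' \<subseteq> S"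
    and w'_eq: "\<And>ys. ys \<in> S \<Longrightarrow> w' ys = w ys + t * d ys" and t: "t \<ge> 0"
    and Kc: "(\<exists>ys\<in>S. K ys = \<infinity>) \<or> (\<Sum>ys\<in>S. d ys * real_of_ereal (K ys)) \<le> 0"
    and Km: "\<And>ys. K ys \<noteq> -\<infinity>"
  shows "weighted_cost N K w' \<le> weighted_cost N K w"
proof (cases "\<exists>ys\<in>S. K ys = \<infinity>")
  case True
  then obtain yi where yi: "yi \<in> S" "K yi = \<infinity>" by blast
  have "w yi > 0" using yi(1) w S by (auto simp: weight_support_def config_weights_def order.order_iff_strict)
  then have "(\<Sum>ys\<in>S. ereal (w ys) * K ys) = \<infinity>"
    using yi S by (subst sum_Pinfty) auto
  then have "weighted_cost N K w = \<infinity>"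
    using weighted_cost_eq_sum[OF w order.refl weight_support_subset] S by simp
  then show ?thesis by simp
next
  case False
  then have neg: "(\<Sum>ys\<in>S. d ys * real_of_ereal (K ys)) \<le> 0" using Kc by blast
  have SC: "S \<subseteq> configs N" using S weight_support_subset by simp
  have real_cost: "weighted_cost N K v = ereal (\<Sum>ys\<in>S. v ys * real_of_ereal (K ys))"
    if "config_weights N lam v" "weight_support N v \<subseteq> S" for v
  proof -
    have "K ys = ereal (real_of_ereal (K ys))" if "ys \<in> S" for ys
      using False that Km[of ys] by (cases "K ys") auto
    then have "(\<Sum>ys\<in>S. ereal (v ys) * K ys) = (\<Sum>ys\<in>S. ereal (v ys * real_of_ereal (K ys)))"
      by (intro sum.cong refl) (metis times_ereal.simps(1))
    then show ?thesis using weighted_cost_eq_sum[OF that SC] by simp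
  qed
  have "(\<Sum>ys\<in>S. w' ys * real_of_ereal (K ys)) =
        (\<Sum>ys\<in>S. w ys * real_of_ereal (K ys)) + t * (\<Sum>ys\<in>S. d ys * real_of_ereal (K ys))"
    by (simp add: w'_eq algebra_simps sum.distrib sum_distrib_left)
  also have "\<dots> \<le> (\<Sum>ys\<in>S. w ys * real_of_ereal (K ys))"
    using t neg by (simp add: mult_nonneg_nonpos)
  finally show ?thesis using real_cost[OF w' sub] real_cost[OF w] S by simp
qed

lemma config_weights_shrink_support:
  fixes w :: "'a::finite list \<Rightarrow> real"
  assumes w: "config_weights N lam w" and S: "S = weight_support N w"
    and dl: "\<And>a. (\<Sum>ys\<in>S. d ys * empirical N ys a) = 0" and y1: "y1 \<in> S" "d y1 < 0"
    and Kc: "(\<exists>ys\<in>S. K ys = \<infinity>) \<or> (\<Sum>ys\<in>S. d ys * real_of_ereal (K ys)) \<le> 0"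
    and Km: "\<And>ys. K ys \<noteq> -\<infinity>"
  shows "\<exists>w'. config_weights N lam w' \<and> weight_support N w' \<subset> S \<and>
             weighted_cost N K w' \<le> weighted_cost N K w"
proof -
  have SC: "S \<subseteq> configs N" using S weight_support_subset by simp
  have w0: "\<And>ys. w ys \<ge> 0" using w by (simp add: config_weights_def)
  have "w ys > 0" if "ys \<in> S" for ys using that w0[of ys] S by (auto simp: weight_support_def less_le)
  then obtain t ym where t: "t > 0" "\<And>ys. ys \<in> S \<Longrightarrow> 0 \<le> w ys + t * d ys"
    and ym: "ym \<in> S" "w ym + t * d ym = 0"
    using exists_maximal_step[of S y1 d w] y1 finite_subset[OF SC] by auto
  define w' where "w' ys = w ys + t * (if ys \<in> S then d ys else 0)" for ys
  have out: "w' ys = 0" if "ys \<notin> S" for ys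
    using that config_weights_eq_0[OF w] S by (simp add: w'_def)
  have "(\<Sum>ys\<in>configs N. w' ys * empirical N ys a) = lam a" for a
  proof -
    have "(\<Sum>ys\<in>configs N. (if ys \<in> S then d ys else 0) * empirical N ys a) =
        (\<Sum>ys\<in>S. d ys * empirical N ys a)"
      by (rule sum.mono_neutral_cong_right) (use SC in auto)
    then have "(\<Sum>ys\<in>configs N. (if ys \<in> S then d ys else 0) * empirical N ys a) = 0"
      using dl[of a] by simp
    then show ?thesis using w
      by (simp add: w'_def algebra_simps sum.distrib config_weights_def flip: sum_distrib_left)
  qed
  then have w': "config_weights N lam w'"
    using t w0 out SC by (auto simp: config_weights_def w'_def)
  have sub: "weight_support N w' \<subseteq> S" using out by (auto simp: weight_support_def)
  moreover have "ym \<notin> weight_support N w'" using ym by (simp add: weight_support_def w'_def)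
  moreover have "weighted_cost N K w' \<le> weighted_cost N K w"
    by (rule weighted_cost_along_direction[OF w w' S sub, where t=t and d=d, OF _ _ Kc Km])
      (use t in \<open>simp_all add: w'_def\<close>)
  ultimately show ?thesis using w' ym(1) by blast
qed

lemma exists_empirically_independent_support:
  fixes w :: "'a::finite list \<Rightarrow> real"
  assumes N: "N \<ge> 1" and Km: "\<And>ys. K ys \<noteq> -\<infinity>" and w: "config_weights N lam w"
  shows "\<exists>w'. config_weights N lam w' \<and> empirically_independent N (weight_support N w') \<and>
             weighted_cost N K w' \<le> weighted_cost N K w"
  using w
proof (induction "card (weight_support N w)" arbitrary: w rule: less_induct)
  case less
  let ?S = "weight_support N w"
  show ?case
  proof (cases "empirically_independent N ?S")
    case False
    then obtain d where dl: "\<And>a. (\<Sum>ys\<in>?S. d ys * empirical N ys a) = 0"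
      and y1: "\<exists>y\<in>?S. d y < 0" and Kc: "(\<Sum>ys\<in>?S. d ys * real_of_ereal (K ys)) \<le> 0"
      using exists_descent_direction[OF N weight_support_subset, of w "real_of_ereal \<circ> K"] by auto
    obtain y where y: "y \<in> ?S" "d y < 0" using y1 by blast
    obtain w' where w': "config_weights N lam w'" "weight_support N w' \<subset> ?S"
      "weighted_cost N K w' \<le> weighted_cost N K w"
      using config_weights_shrink_support[OF less.prems refl dl y, of K] Kc Km by blast
    then have "card (weight_support N w') < card ?S" by (simp add: psubset_card_mono)
    then show ?thesis using less.hyps[OF _ w'(1)] w'(3) by (meson order.trans)
  qed (use less.prems in blast)
qed

lemma config_weights_eq_if_independent_support:
  fixes w1 w2 :: "'a::finite list \<Rightarrow> real"
  assumes w1: "config_weights N lam w1" and w2: "config_weights N lam w2"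
    and eq: "weight_support N w1 = weight_support N w2"
    and ind: "empirically_independent N (weight_support N w1)"
  shows "w1 = w2"
proof -
  let ?S = "weight_support N w1"
  have lam: "(\<Sum>ys\<in>?S. w ys * empirical N ys a) = lam a"
    if "config_weights N lam w" "weight_support N w = ?S" for w a
    using sum_configs_eq_sum_superset_support[OF that(1) that(2)[THEN equalityD1] weight_support_subset,
        where f="\<lambda>x ys. x * empirical N ys a"] that by (simp add: config_weights_def)
  have "(\<Sum>ys\<in>?S. (w1 ys - w2 ys) * empirical N ys a) = 0" for a
    using lam[OF w1 refl, of a] lam[OF w2 eq[symmetric], of a] by (simp add: left_diff_distrib sum_subtractf)
  then have "\<forall>ys\<in>?S. w1 ys - w2 ys = 0"
    using ind[unfolded empirically_independent_def, THEN spec[of _ "\<lambda>ys. w1 ys - w2 ys"]] by blast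
  moreover have "w1 ys = w2 ys" if "ys \<notin> ?S" for ys
    using config_weights_eq_0[OF w1 that] config_weights_eq_0[OF w2] that eq by simp
  ultimately show ?thesis by fastforce
qed

lemma card_le_CARD_if_lin_independent:
  fixes v :: "'b \<Rightarrow> real^'a::finite"
  assumes fin: "finite S" and ind: "\<And>d. (\<Sum>s\<in>S. d s *\<^sub>R v s) = 0 \<Longrightarrow> (\<forall>s\<in>S. d s = 0)"
  shows "card S \<le> CARD('a)"
proof -
  have inj: "inj_on v S"
  proof (rule inj_onI, rule ccontr)
    fix s1 s2 assume s: "s1 \<in> S" "s2 \<in> S" "v s1 = v s2" "s1 \<noteq> s2"
    define d where "d s = (if s = s1 then 1 else if s = s2 then -1 else (0::real))" for s
    have "(\<Sum>s\<in>S. d s *\<^sub>R v s) = (\<Sum>s\<in>{s1,s2}. d s *\<^sub>R v s)"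
      by (rule sum.mono_neutral_right) (use fin s in \<open>auto simp: d_def\<close>)
    also have "\<dots> = 0" using s by (simp add: d_def)
    finally have "\<forall>s\<in>S. d s = 0" by (rule ind)
    then show False using s by (auto simp: d_def)
  qed
  have "independent (v ` S)"
  proof
    assume "dependent (v ` S)"
    then obtain u where u: "\<exists>x\<in>v ` S. u x \<noteq> 0" "(\<Sum>x\<in>v ` S. u x *\<^sub>R x) = 0"
      using fin by (auto simp: dependent_finite)
    have "(\<Sum>s\<in>S. u (v s) *\<^sub>R v s) = 0" using u(2) by (simp add: sum.reindex[OF inj])
    then have "\<forall>s\<in>S. u (v s) = 0" by (rule ind)
    then show False using u(1) by auto
  qed
  then have "card (v ` S) \<le> DIM(real^'a)" using independent_bound by blast
  then show ?thesis using card_image[OF inj] by simp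
qed

lemma card_le_CARD_if_empirically_independent:
  fixes S :: "'a::finite list set"
  assumes "finite S" "empirically_independent N S"
  shows "card S \<le> CARD('a)"
proof (rule card_le_CARD_if_lin_independent[where v="\<lambda>ys. \<chi> a. empirical N ys a", OF assms(1)])
  fix d :: "'a list \<Rightarrow> real"
  assume "(\<Sum>s\<in>S. d s *\<^sub>R (\<chi> a. empirical N s a)) = 0"
  then have "\<forall>a. (\<Sum>s\<in>S. d s * empirical N s a) = 0" by (simp add: vec_eq_iff)
  then show "\<forall>s\<in>S. d s = 0" using assms(2) by (simp add: empirically_independent_def)
qed

lemma count_list_replicate: "count_list (replicate n x) y = (if x = y then n else 0)"
  by (induction n) auto

lemma config_weights_diagonal:
  fixes lam :: "'a::finite \<Rightarrow> real"
  assumes N: "N \<ge> 1" and lam: "\<And>a. lam a \<ge> 0"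
  shows "config_weights N lam (\<lambda>ys. \<Sum>a\<in>UNIV. if ys = replicate N a then lam a else 0)"
  unfolding config_weights_def
proof (intro conjI allI impI)
  fix b
  have "(\<Sum>ys\<in>configs N. (\<Sum>a\<in>UNIV. if ys = replicate N a then lam a else 0) * empirical N ys b) =
      (\<Sum>a\<in>UNIV. \<Sum>ys\<in>configs N. if ys = replicate N a then lam a * empirical N ys b else 0)"
    unfolding sum_distrib_right by (subst sum.swap) (simp add: if_distrib[of "\<lambda>x. x * _"] cong: if_cong)
  also have "\<dots> = (\<Sum>a\<in>UNIV. lam a * empirical N (replicate N a) b)"
    by (intro sum.cong refl, subst sum.delta) auto
  also have "\<dots> = lam b"
  proof -
    have "lam a * empirical N (replicate N a) b = (if a = b then lam a else 0)" for a
      using N by (simp add: empirical_def count_list_replicate)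
    then show ?thesis by simp
  qed
  finally show "(\<Sum>ys\<in>configs N. (\<Sum>a\<in>UNIV. if ys = replicate N a then lam a else 0) * empirical N ys b) = lam b" .
qed (use lam in \<open>auto intro!: sum_nonneg sum.neutral\<close>)

text \<open>Weights with independent support are determined by their support, so there are finitely
  many of them, and each weight is dominated by one of them: the minimum over them is optimal.\<close>

lemma exists_optimal_config_weights:
  fixes lam :: "'a::finite \<Rightarrow> real"
  assumes N: "N \<ge> 1" and Km: "\<And>ys. K ys \<noteq> -\<infinity>" and lam: "\<And>a. lam a \<ge> 0"
  shows "\<exists>w. config_weights N lam w \<and> card (weight_support N w) \<le> CARD('a) \<and>
             (\<forall>w'. config_weights N lam w' \<longrightarrow> weighted_cost N K w \<le> weighted_cost N K w')"
proof -
  define B where "B = {w. config_weights N lam w \<and> empirically_independent N (weight_support N w)}"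
  have "inj_on (weight_support N) B"
    by (rule inj_onI) (auto simp: B_def intro: config_weights_eq_if_independent_support)
  then have finB: "finite B"
    by (rule inj_on_finite[where B="Pow (configs N)"]) (auto simp: weight_support_def)
  have dominated: "\<exists>w\<in>B. weighted_cost N K w \<le> weighted_cost N K w'" if "config_weights N lam w'" for w'
    using exists_empirically_independent_support[of N K, OF N Km that] by (auto simp: B_def)
  then have "B \<noteq> {}" using config_weights_diagonal[of N lam, OF N lam] by blast
  then have "Min (weighted_cost N K ` B) \<in> weighted_cost N K ` B" using finB by (intro Min_in) auto
  then obtain wm where wm: "wm \<in> B" "weighted_cost N K wm = Min (weighted_cost N K ` B)" by auto
  then have min: "weighted_cost N K wm \<le> weighted_cost N K w" if "w \<in> B" for w
    using finB that by simp
  have "weighted_cost N K wm \<le> weighted_cost N K w'" if "config_weights N lam w'" for w'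
    using dominated[OF that] min by (meson order.trans)
  moreover have "card (weight_support N wm) \<le> CARD('a)"
    using wm(1) by (intro card_le_CARD_if_empirically_independent) (auto simp: B_def)
  ultimately show ?thesis using wm(1) by (auto simp: B_def)
qed

section \<open>Minimizers of the Kantorovich problem\<close>

lemma kant_adm_sum_sym_dirac:
  fixes ys :: "'i \<Rightarrow> 'a::finite list"
  assumes I: "finite I" and \<alpha>: "\<And>i. i \<in> I \<Longrightarrow> \<alpha> i \<ge> 0"
    and ys: "\<And>i. i \<in> I \<Longrightarrow> length (ys i) = N" and N: "N \<ge> 1"
    and lam: "\<And>a. (\<Sum>i\<in>I. \<alpha> i * empirical N (ys i) a) = lam a" and lam_prob: "is_prob lam"
  shows "kant_adm N lam (\<lambda>xs. \<Sum>i\<in>I. \<alpha> i * sym_dirac N (ys i) xs)"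
proof -
  let ?\<gamma> = "\<lambda>xs. \<Sum>i\<in>I. \<alpha> i * sym_dirac N (ys i) xs"
  have "(\<Sum>i\<in>I. \<alpha> i) = (\<Sum>i\<in>I. \<alpha> i * (\<Sum>a\<in>UNIV. empirical N (ys i) a))"
    using ys N by (simp add: sum_empirical)
  also have "\<dots> = 1"
    using lam_prob by (simp add: sum_distrib_left lam is_prob_def flip: sum.swap[of _ I])
  finally have sum_\<alpha>: "(\<Sum>i\<in>I. \<alpha> i) = 1" .
  have "(\<Sum>xs\<in>configs N. ?\<gamma> xs) = (\<Sum>i\<in>I. \<alpha> i * (\<Sum>xs\<in>configs N. sym_dirac N (ys i) xs))"
    by (simp add: sum_distrib_left sum.swap[of _ I])
  also have "\<dots> = 1"
    using ys sum_\<alpha> by (simp add: sum_sym_dirac)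
  finally have "(\<Sum>xs\<in>configs N. ?\<gamma> xs) = 1" .
  then have "is_prob_N N ?\<gamma>"
    using \<alpha> by (auto simp: is_prob_N_def sym_dirac_eq_0 intro!: sum_nonneg mult_nonneg_nonneg sym_dirac_nonneg)
  moreover have "symmetrize N ?\<gamma> = ?\<gamma>"
    by (simp add: symmetrize_sum)
  moreover have "marg N 0 ?\<gamma> = lam"
    using ys N by (auto simp: marg_sum marg_sym_dirac lam)
  ultimately show ?thesis by (simp add: kant_adm_def sym_prob_def)
qed

lemma marg_symmetrize:
  fixes \<gamma> :: "'a::finite list \<Rightarrow> real"
  assumes "N \<ge> 1"
  shows "marg N 0 (symmetrize N \<gamma>) a = (\<Sum>ys\<in>configs N. \<gamma> ys * empirical N ys a)"
  using assms by (simp add: symmetrize_eq_sum_sym_dirac marg_sum marg_sym_dirac)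

lemma cost_symmetrize:
  fixes \<gamma> :: "'a::finite list \<Rightarrow> real"
  assumes "\<And>ys. \<gamma> ys \<ge> 0"
  shows "cost N cN (symmetrize N \<gamma>) = weighted_cost N (\<lambda>ys. cost N cN (sym_dirac N ys)) \<gamma>"
  unfolding symmetrize_eq_sum_sym_dirac weighted_cost_def
  by (rule cost_sum) (auto simp: assms sym_dirac_nonneg)

lemma kant_adm_imp_config_weights:
  fixes \<gamma> :: "'a::finite list \<Rightarrow> real"
  assumes adm: "kant_adm N lam \<gamma>" and N: "N \<ge> 1"
  shows "config_weights N lam \<gamma>"
    and "cost N cN \<gamma> = weighted_cost N (\<lambda>ys. cost N cN (sym_dirac N ys)) \<gamma>"
proof -
  have sym: "symmetrize N \<gamma> = \<gamma>" and prob: "is_prob_N N \<gamma>" and marg: "marg N 0 \<gamma> = lam"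
    using adm by (auto simp: kant_adm_def sym_prob_def)
  show "config_weights N lam \<gamma>"
    using prob marg marg_symmetrize[OF N, of \<gamma>]
    by (auto simp: config_weights_def is_prob_N_def sym)
  show "cost N cN \<gamma> = weighted_cost N (\<lambda>ys. cost N cN (sym_dirac N ys)) \<gamma>"
    using cost_symmetrize[of \<gamma> N cN] prob by (simp add: sym is_prob_N_def)
qed

lemma sum_reindex_weight_support:
  fixes w :: "'a::finite list \<Rightarrow> real" and g :: "real \<Rightarrow> 'a list \<Rightarrow> 'b::comm_monoid_add"
    and f :: "'a list \<Rightarrow> 'i::finite"
  assumes w: "config_weights N lam w" and inj: "inj_on f (weight_support N w)" and g0: "\<And>ys. g 0 ys = 0"
  defines "ys \<equiv> \<lambda>\<nu>. if \<nu> \<in> f ` weight_support N w then inv_into (weight_support N w) f \<nu> else replicate N undefined"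
    and "\<alpha> \<equiv> \<lambda>\<nu>. if \<nu> \<in> f ` weight_support N w then w (inv_into (weight_support N w) f \<nu>) else 0"
  shows "(\<Sum>\<nu>\<in>UNIV. g (\<alpha> \<nu>) (ys \<nu>)) = (\<Sum>ys\<in>configs N. g (w ys) ys)"
proof -
  let ?S = "weight_support N w"
  have "(\<Sum>\<nu>\<in>UNIV. g (\<alpha> \<nu>) (ys \<nu>)) = (\<Sum>\<nu>\<in>f ` ?S. g (\<alpha> \<nu>) (ys \<nu>))"
    by (rule sum.mono_neutral_right) (auto simp: \<alpha>_def g0)
  also have "\<dots> = (\<Sum>y\<in>?S. g (w y) y)"
    by (simp add: sum.reindex[OF inj] \<alpha>_def ys_def inv_into_f_f[OF inj])
  also have "\<dots> = (\<Sum>ys\<in>configs N. g (w ys) ys)"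
    by (rule sum_configs_eq_sum_superset_support[OF w order.refl weight_support_subset, symmetric]) (rule g0)
  finally show ?thesis .
qed

lemma config_weights_reindex:
  fixes w :: "'a::finite list \<Rightarrow> real"
  assumes w: "config_weights N lam w" and card: "card (weight_support N w) \<le> CARD('i::finite)"
  shows "\<exists>(\<alpha> :: 'i \<Rightarrow> real) ys. (\<forall>\<nu>. \<alpha> \<nu> \<ge> 0) \<and> (\<forall>\<nu>. length (ys \<nu>) = N) \<and>
     (\<forall>a. (\<Sum>\<nu>\<in>UNIV. \<alpha> \<nu> * empirical N (ys \<nu>) a) = lam a) \<and>
     (\<Sum>\<nu>\<in>UNIV. ereal (\<alpha> \<nu>) * K (ys \<nu>)) = weighted_cost N K w"
proof -
  let ?S = "weight_support N w"
  obtain f :: "'a list \<Rightarrow> 'i" where inj: "inj_on f ?S"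
    using card_le_inj[of ?S "UNIV :: 'i set"] card by auto
  define ys where "ys \<nu> = (if \<nu> \<in> f ` ?S then inv_into ?S f \<nu> else replicate N undefined)" for \<nu>
  define \<alpha> where "\<alpha> \<nu> = (if \<nu> \<in> f ` ?S then w (inv_into ?S f \<nu>) else 0)" for \<nu>
  note reindex = sum_reindex_weight_support[OF w inj, folded ys_def \<alpha>_def]
  have "\<alpha> \<nu> \<ge> 0" for \<nu> using w by (simp add: \<alpha>_def config_weights_def)
  moreover have "length (ys \<nu>) = N" for \<nu>
    using inv_into_into[of _ f ?S] by (auto simp: ys_def weight_support_def)
  moreover have "(\<Sum>\<nu>\<in>UNIV. \<alpha> \<nu> * empirical N (ys \<nu>) a) = lam a" for a
    using reindex[of "\<lambda>x ys. x * empirical N ys a"] w by (simp add: config_weights_def)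
  moreover have "(\<Sum>\<nu>\<in>UNIV. ereal (\<alpha> \<nu>) * K (ys \<nu>)) = weighted_cost N K w"
    unfolding weighted_cost_def by (rule reindex) (simp add: zero_ereal_def[symmetric])
  ultimately show ?thesis by blast
qed

lemma exists_kant_min_sum_sym_dirac:
  fixes lam :: "'a::finite \<Rightarrow> real"
  assumes N: "N \<ge> 1" and cN: "\<And>xs. cN xs \<noteq> -\<infinity>" and lam_prob: "is_prob lam"
  shows "\<exists>(\<alpha> :: 'a \<Rightarrow> real) ys. (\<forall>\<nu>. \<alpha> \<nu> \<ge> 0) \<and> (\<forall>\<nu>. length (ys \<nu>) = N) \<and>
     (\<forall>a. (\<Sum>\<nu>\<in>UNIV. \<alpha> \<nu> * empirical N (ys \<nu>) a) = lam a) \<and>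
     kant_min N cN lam (\<lambda>xs. \<Sum>\<nu>\<in>UNIV. \<alpha> \<nu> * sym_dirac N (ys \<nu>) xs)"
proof -
  define K where "K = (\<lambda>ys. cost N cN (sym_dirac N ys))"
  have "K ys \<noteq> -\<infinity>" for ys unfolding K_def using cN sym_dirac_nonneg by (rule cost_not_minf)
  moreover have "lam a \<ge> 0" for a using lam_prob by (simp add: is_prob_def)
  ultimately obtain wm where wm: "config_weights N lam wm" "card (weight_support N wm) \<le> CARD('a)"
    and opt: "\<And>w'. config_weights N lam w' \<Longrightarrow> weighted_cost N K wm \<le> weighted_cost N K w'"
    using exists_optimal_config_weights[of N K lam] N by blast
  obtain \<alpha> :: "'a \<Rightarrow> real" and ys where \<alpha>: "\<forall>\<nu>. \<alpha> \<nu> \<ge> 0" and ys: "\<forall>\<nu>. length (ys \<nu>) = N"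
    and lam: "\<forall>a. (\<Sum>\<nu>\<in>UNIV. \<alpha> \<nu> * empirical N (ys \<nu>) a) = lam a"
    and cost: "(\<Sum>\<nu>\<in>UNIV. ereal (\<alpha> \<nu>) * K (ys \<nu>)) = weighted_cost N K wm"
    using config_weights_reindex[OF wm] by blast
  let ?\<gamma> = "\<lambda>xs. \<Sum>\<nu>\<in>UNIV. \<alpha> \<nu> * sym_dirac N (ys \<nu>) xs"
  have "cost N cN ?\<gamma> = (\<Sum>\<nu>\<in>UNIV. ereal (\<alpha> \<nu>) * K (ys \<nu>))"
    unfolding K_def by (rule cost_sum) (use \<alpha> sym_dirac_nonneg in auto)
  then have "cost N cN ?\<gamma> = weighted_cost N K wm" using cost by simp
  moreover have "weighted_cost N K wm \<le> cost N cN \<gamma>'" if "kant_adm N lam \<gamma>'" for \<gamma>'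
    using opt[OF kant_adm_imp_config_weights(1)[OF that N]] kant_adm_imp_config_weights(2)[OF that N, of cN]
    by (simp add: K_def)
  moreover have "kant_adm N lam ?\<gamma>"
    by (rule kant_adm_sum_sym_dirac) (use \<alpha> ys N lam lam_prob in auto)
  ultimately have "kant_min N cN lam ?\<gamma>" by (simp add: kant_min_def)
  then show ?thesis using \<alpha> ys lam by blast
qed

lemma sum_empirical_eq_mean_marg:
  fixes \<gamma> :: "'a::finite list \<Rightarrow> real"
  shows "(\<Sum>ys\<in>configs N. \<gamma> ys * empirical N ys a) = (\<Sum>k<N. marg N k \<gamma> a) / real N"
proof -
  have "\<gamma> ys * empirical N ys a = (\<Sum>k<N. if ys ! k = a then \<gamma> ys else 0) / real N"
    if "length ys = N" for ys
    using that by (simp add: empirical_def count_list_eq_card sum.If_cases lessThan_def Collect_conj_eq)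
  then have "(\<Sum>ys\<in>configs N. \<gamma> ys * empirical N ys a) =
      (\<Sum>ys\<in>configs N. \<Sum>k<N. if ys ! k = a then \<gamma> ys else 0) / real N"
    by (simp add: sum_divide_distrib)
  also have "\<dots> = (\<Sum>k<N. marg N k \<gamma> a) / real N"
    unfolding marg_def by (subst sum.swap) (intro arg_cong2[where f="(/)"] sum.cong refl sum.inter_filter[symmetric] finite_configs)
  finally show ?thesis .
qed

lemma kant_adm_symmetrize:
  fixes \<gamma> :: "'a::finite list \<Rightarrow> real"
  assumes N: "N \<ge> 1" and prob: "is_prob_N N \<gamma>" and marg: "\<forall>k<N. marg N k \<gamma> = lam"
    and lam_prob: "is_prob lam"
  shows "kant_adm N lam (symmetrize N \<gamma>)"
  unfolding symmetrize_eq_sum_sym_dirac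
proof (rule kant_adm_sum_sym_dirac[OF finite_configs _ _ N _ lam_prob])
  fix a
  show "(\<Sum>ys\<in>configs N. \<gamma> ys * empirical N ys a) = lam a"
    using N marg by (simp add: sum_empirical_eq_mean_marg)
qed (use prob in \<open>auto simp: is_prob_N_def\<close>)

lemma cost_symmetrize_symmetric:
  fixes \<gamma> :: "'a::finite list \<Rightarrow> real"
  assumes "\<And>ys. \<gamma> ys \<ge> 0"
    and symc: "\<forall>\<sigma> xs. \<sigma> permutes {0..<N} \<and> length xs = N \<longrightarrow> cN (perm_config \<sigma> xs) = cN xs"
  shows "cost N cN (symmetrize N \<gamma>) = cost N cN \<gamma>"
proof -
  have "cost N cN (symmetrize N \<gamma>) = weighted_cost N (\<lambda>ys. cost N cN (sym_dirac N ys)) \<gamma>"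
    by (rule cost_symmetrize[OF assms(1)])
  also have "\<dots> = cost N cN \<gamma>"
    unfolding weighted_cost_def cost_def[of N cN \<gamma>] by (intro sum.cong refl) (simp add: cost_sym_dirac_symmetric[OF _ symc])
  finally show ?thesis .
qed

lemma kant_min_le_cost_all_marginals:
  fixes \<gamma> \<gamma>' :: "'a::finite list \<Rightarrow> real"
  assumes min: "kant_min N cN lam \<gamma>" and N: "N \<ge> 1" and lam_prob: "is_prob lam"
    and symc: "\<forall>\<sigma> xs. \<sigma> permutes {0..<N} \<and> length xs = N \<longrightarrow> cN (perm_config \<sigma> xs) = cN xs"
    and prob: "is_prob_N N \<gamma>'" and marg: "\<forall>k<N. marg N k \<gamma>' = lam"
  shows "cost N cN \<gamma> \<le> cost N cN \<gamma>'"
proof -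
  have "cost N cN \<gamma> \<le> cost N cN (symmetrize N \<gamma>')"
    using min kant_adm_symmetrize[OF N prob marg lam_prob] by (simp add: kant_min_def)
  also have "\<dots> = cost N cN \<gamma>'"
    using prob symc by (intro cost_symmetrize_symmetric) (auto simp: is_prob_N_def)
  finally show ?thesis .
qed

lemma SAE_sum_sym_dirac:
  fixes \<alpha> :: "'a::finite \<Rightarrow> real" and ys :: "'a \<Rightarrow> 'a list"
  assumes "\<forall>\<nu>. \<alpha> \<nu> \<ge> 0" and ys: "\<forall>\<nu>. length (ys \<nu>) = N"
    and lam: "\<forall>a. (\<Sum>\<nu>\<in>UNIV. \<alpha> \<nu> * empirical N (ys \<nu>) a) = lam a"
  shows "SAE N lam (\<lambda>xs. \<Sum>\<nu>\<in>UNIV. \<alpha> \<nu> * sym_dirac N (ys \<nu>) xs)"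
  unfolding SAE_def
proof (intro exI[of _ "\<lambda>k \<nu>. ys \<nu> ! k"] exI[of _ \<alpha>] conjI allI)
  have "emp N (\<lambda>k \<nu>. ys \<nu> ! k) \<nu> a = empirical N (ys \<nu>) a" for \<nu> a
    using ys by (simp add: emp_def empirical_def count_list_eq_card)
  then show "(\<Sum>\<nu>\<in>UNIV. \<alpha> \<nu> * emp N (\<lambda>k \<nu>. ys \<nu> ! k) \<nu> a) = lam a" for a
    using lam by simp
  have "map (\<lambda>k. ys \<nu> ! k) [0..<N] = ys \<nu>" for \<nu>
    using map_nth[of "ys \<nu>"] ys by simp
  then show "(\<lambda>xs. \<Sum>\<nu>\<in>UNIV. \<alpha> \<nu> * sym_dirac N (ys \<nu>) xs) =
      (\<lambda>xs. \<Sum>\<nu>\<in>UNIV. \<alpha> \<nu> * symmetrize N (dirac_cfg (map (\<lambda>k. ys \<nu> ! k) [0..<N])) xs)"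
    by (simp add: sym_dirac_def)
qed (use assms(1) in simp)

section \<open>Pair costs and the reduced problem\<close>

definition ordered_pairs :: "nat \<Rightarrow> (nat \<times> nat) set" where
  "ordered_pairs N = {(i, j). i < j \<and> j < N}"

definition offdiag_pairs :: "nat \<Rightarrow> (nat \<times> nat) set" where
  "offdiag_pairs N = {(i, j). i < N \<and> j < N \<and> i \<noteq> j}"

definition reverse_index :: "nat \<Rightarrow> nat \<Rightarrow> nat" where
  "reverse_index N i = (if i < N then N - Suc i else i)"

lemma finite_ordered_pairs [simp]: "finite (ordered_pairs N)"
  by (rule finite_subset[of _ "{..<N} \<times> {..<N}"]) (auto simp: ordered_pairs_def)

lemma reverse_index_reverse_index [simp]: "reverse_index N (reverse_index N i) = i"
  by (simp add: reverse_index_def)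

lemma reverse_index_permutes: "reverse_index N permutes {0..<N}"
  by (rule bij_imp_permutes, rule bij_betw_byWitness[where f'="reverse_index N"])
    (auto simp: reverse_index_def)

lemma offdiag_pairs_image_permutes:
  assumes \<sigma>: "\<sigma> permutes {0..<N}"
  shows "(\<lambda>(i, j). (\<sigma> i, \<sigma> j)) ` offdiag_pairs N \<subseteq> offdiag_pairs N"
proof
  fix x assume "x \<in> (\<lambda>(i, j). (\<sigma> i, \<sigma> j)) ` offdiag_pairs N"
  then obtain i j where x: "x = (\<sigma> i, \<sigma> j)" and ij: "i < N" "j < N" "i \<noteq> j"
    by (auto simp: offdiag_pairs_def)
  have "\<sigma> i \<in> {0..<N}" "\<sigma> j \<in> {0..<N}" using ij permutes_in_image[OF \<sigma>] by simp_all
  moreover have "\<sigma> i \<noteq> \<sigma> j" using ij(3) permutes_inj[OF \<sigma>] by (simp add: inj_eq)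
  ultimately show "x \<in> offdiag_pairs N" using x by (simp add: offdiag_pairs_def)
qed

lemma sum_offdiag_pairs_permute:
  assumes \<sigma>: "\<sigma> permutes {0..<N}"
  shows "(\<Sum>(i, j)\<in>offdiag_pairs N. h (\<sigma> i) (\<sigma> j)) = (\<Sum>(i, j)\<in>offdiag_pairs N. h i j)"
proof -
  have "bij_betw (\<lambda>(i, j). (\<sigma> i, \<sigma> j)) (offdiag_pairs N) (offdiag_pairs N)"
  proof (rule bij_betw_byWitness[where f'="\<lambda>(i, j). (inv \<sigma> i, inv \<sigma> j)"])
    show "\<forall>p\<in>offdiag_pairs N. (\<lambda>(i, j). (inv \<sigma> i, inv \<sigma> j)) ((\<lambda>(i, j). (\<sigma> i, \<sigma> j)) p) = p"
      by (simp add: case_prod_beta' permutes_inverses(2)[OF \<sigma>])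
    show "\<forall>p\<in>offdiag_pairs N. (\<lambda>(i, j). (\<sigma> i, \<sigma> j)) ((\<lambda>(i, j). (inv \<sigma> i, inv \<sigma> j)) p) = p"
      by (simp add: case_prod_beta' permutes_inverses(1)[OF \<sigma>])
  qed (rule offdiag_pairs_image_permutes[OF \<sigma>], rule offdiag_pairs_image_permutes[OF permutes_inv[OF \<sigma>]])
  from sum.reindex_bij_betw[OF this, of "\<lambda>(i, j). h i j"] show ?thesis
    by (simp add: case_prod_beta')
qed

lemma sum_ordered_pairs_reverse:
  "(\<Sum>(i, j)\<in>ordered_pairs N. F (reverse_index N i) (reverse_index N j)) = (\<Sum>(i, j)\<in>ordered_pairs N. F j i)"
proof -
  have "bij_betw (\<lambda>(p, q). (reverse_index N q, reverse_index N p)) (ordered_pairs N) (ordered_pairs N)"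
    by (rule bij_betw_byWitness[where f'="\<lambda>(p, q). (reverse_index N q, reverse_index N p)"])
      (auto simp: ordered_pairs_def reverse_index_def)
  from sum.reindex_bij_betw[OF this, of "\<lambda>(i, j). F (reverse_index N i) (reverse_index N j)"] show ?thesis
    by (simp add: case_prod_beta')
qed

lemma sum_ordered_pairs_add_swapped:
  fixes F :: "nat \<Rightarrow> nat \<Rightarrow> 'b::comm_monoid_add"
  shows "(\<Sum>(i, j)\<in>ordered_pairs N. F i j) + (\<Sum>(i, j)\<in>ordered_pairs N. F j i) =
    (\<Sum>(i, j)\<in>offdiag_pairs N. F i j)"
proof -
  let ?swap = "\<lambda>(i, j). (j, i)"
  have eq: "offdiag_pairs N = ordered_pairs N \<union> ?swap ` ordered_pairs N"
    by (auto simp: ordered_pairs_def offdiag_pairs_def)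
  have "(\<Sum>(i, j)\<in>offdiag_pairs N. F i j) =
      (\<Sum>(i, j)\<in>ordered_pairs N. F i j) + (\<Sum>(i, j)\<in>?swap ` ordered_pairs N. F i j)"
    unfolding eq by (rule sum.union_disjoint) (simp_all, auto simp: ordered_pairs_def)
  also have "(\<Sum>(i, j)\<in>?swap ` ordered_pairs N. F i j) = (\<Sum>(i, j)\<in>ordered_pairs N. F j i)"
    by (subst sum.reindex) (auto simp: inj_on_def comp_def case_prod_beta')
  finally show ?thesis by simp
qed

text \<open>Composing with the index reversal exchanges the pairs \<open>i < j\<close> and \<open>j < i\<close>, so twice the
  cost of a symmetrized Dirac is the sum of \<open>c\<close> over all pairs of distinct indices.\<close>

lemma cost_sym_dirac_pair_cost:
  assumes ys: "length ys = N"
    and cN: "\<forall>xs. length xs = N \<longrightarrow> cN xs = (\<Sum>(i, j)\<in>{(i, j). i < j \<and> j < N}. c (xs ! i) (xs ! j))"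
  shows "cost N cN (sym_dirac N ys) = ereal (1/2) * (\<Sum>(p, q)\<in>offdiag_pairs N. c (ys ! p) (ys ! q))"
proof -
  let ?P = "{\<sigma>. \<sigma> permutes {0..<N}}"
  let ?r = "1 / fact N :: real"
  let ?K = "\<Sum>(p, q)\<in>offdiag_pairs N. c (ys ! p) (ys ! q)"
  define A where "A \<sigma> = cN (perm_config \<sigma> ys)" for \<sigma>
  have A: "A \<sigma> = (\<Sum>(i, j)\<in>ordered_pairs N. c (ys ! \<sigma> i) (ys ! \<sigma> j))" for \<sigma>
    unfolding A_def using cN ys by (auto simp: ordered_pairs_def nth_perm_config intro!: sum.cong)
  have AA: "A \<sigma> + A (\<sigma> \<circ> reverse_index N) = ?K" if \<sigma>: "\<sigma> \<in> ?P" for \<sigma>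
  proof -
    have "A (\<sigma> \<circ> reverse_index N) = (\<Sum>(i, j)\<in>ordered_pairs N. c (ys ! \<sigma> j) (ys ! \<sigma> i))"
      using sum_ordered_pairs_reverse[of "\<lambda>a b. c (ys ! \<sigma> a) (ys ! \<sigma> b)"] by (simp add: A)
    then have "A \<sigma> + A (\<sigma> \<circ> reverse_index N) = (\<Sum>(i, j)\<in>offdiag_pairs N. c (ys ! \<sigma> i) (ys ! \<sigma> j))"
      using sum_ordered_pairs_add_swapped[of "\<lambda>a b. c (ys ! \<sigma> a) (ys ! \<sigma> b)"] by (simp add: A)
    also have "\<dots> = ?K"
      using \<sigma> sum_offdiag_pairs_permute[where h="\<lambda>a b. c (ys ! a) (ys ! b)"] by simp
    finally show ?thesis .
  qed
  define Z where "Z = (\<Sum>\<sigma>\<in>?P. ereal ?r * A \<sigma>)"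
  have "Z = (\<Sum>\<sigma>\<in>?P. ereal ?r * A (\<sigma> \<circ> reverse_index N))"
    unfolding Z_def by (rule sum_permutations_compose_right[OF reverse_index_permutes])
  then have "Z + Z = (\<Sum>\<sigma>\<in>?P. ereal ?r * A \<sigma> + ereal ?r * A (\<sigma> \<circ> reverse_index N))"
    by (simp add: Z_def sum.distrib)
  also have "\<dots> = (\<Sum>\<sigma>\<in>?P. ereal ?r * ?K)"
  proof (intro sum.cong refl)
    fix \<sigma> assume "\<sigma> \<in> ?P"
    then show "ereal ?r * A \<sigma> + ereal ?r * A (\<sigma> \<circ> reverse_index N) = ereal ?r * ?K"
      using distrib_left_ereal_nn[of ?r "A \<sigma>" "A (\<sigma> \<circ> reverse_index N)"] AA by (simp add: mult.commute)
  qed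
  also have "\<dots> = ?K"
    using ereal_sum_times[of ?P "\<lambda>_. ?r" ?K] by simp
  finally have "Z + Z = ?K" .
  moreover have "z = ereal (1/2) * k" if "z + z = k" for z k :: ereal
    using that by (cases z) auto
  ultimately have "Z = ereal (1/2) * ?K" by blast
  then show ?thesis unfolding Z_def A_def by (simp add: cost_sym_dirac[OF ys])
qed

lemma card_offdiag_pairs_with_values:
  assumes ys: "length ys = N"
  shows "real (card {pq\<in>offdiag_pairs N. ys ! fst pq = x \<and> ys ! snd pq = y}) =
    real (count_list ys x) * real (count_list ys y) - (if x = y then real (count_list ys x) else 0)"
proof -
  define Ix where "Ix = {p. p < N \<and> ys ! p = x}"
  define Iy where "Iy = {p. p < N \<and> ys ! p = y}"
  define D where "D = {(p, p) | p::nat. True}"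
  have fin: "finite Ix" "finite Iy" by (auto simp: Ix_def Iy_def)
  have eq: "{pq\<in>offdiag_pairs N. ys ! fst pq = x \<and> ys ! snd pq = y} = (Ix \<times> Iy) - D"
    by (auto simp: offdiag_pairs_def Ix_def Iy_def D_def)
  have "(Ix \<times> Iy) \<inter> D = (\<lambda>p. (p, p)) ` (Ix \<inter> Iy)" by (auto simp: D_def)
  then have diag: "card ((Ix \<times> Iy) \<inter> D) = card (Ix \<inter> Iy)"
    by (simp add: card_image inj_on_def)
  have le: "card ((Ix \<times> Iy) \<inter> D) \<le> card (Ix \<times> Iy)"
    by (rule card_mono) (use fin in auto)
  have "card ((Ix \<times> Iy) - D) = card (Ix \<times> Iy) - card ((Ix \<times> Iy) \<inter> D)"
    by (rule card_Diff_subset_Int) (use fin in auto)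
  then have "real (card ((Ix \<times> Iy) - D)) = real (card Ix) * real (card Iy) - real (card (Ix \<inter> Iy))"
    using le diag by (simp add: of_nat_diff card_cartesian_product)
  moreover have "Ix \<inter> Iy = (if x = y then Ix else {})" by (auto simp: Ix_def Iy_def)
  moreover have "card Ix = count_list ys x" "card Iy = count_list ys y"
    using ys by (simp_all add: Ix_def Iy_def count_list_eq_card)
  ultimately show ?thesis unfolding eq by simp
qed

lemma sum_offdiag_pairs_by_values:
  fixes ys :: "'a::finite list" and c :: "'a \<Rightarrow> 'a \<Rightarrow> ereal"
  assumes ys: "length ys = N"
  shows "(\<Sum>(p, q)\<in>offdiag_pairs N. c (ys ! p) (ys ! q)) =
    (\<Sum>x\<in>UNIV. \<Sum>y\<in>UNIV. ereal (real (count_list ys x) * real (count_list ys y)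
        - (if x = y then real (count_list ys x) else 0)) * c x y)"
proof -
  let ?val = "\<lambda>pq. (ys ! fst pq, ys ! snd pq)"
  let ?card = "\<lambda>x y. card {pq\<in>offdiag_pairs N. ys ! fst pq = x \<and> ys ! snd pq = y}"
  have finite: "finite (offdiag_pairs N)"
    by (rule finite_subset[of _ "{..<N} \<times> {..<N}"]) (auto simp: offdiag_pairs_def)
  have "(\<Sum>(p, q)\<in>offdiag_pairs N. c (ys ! p) (ys ! q)) =
      (\<Sum>xy\<in>UNIV. \<Sum>pq\<in>{pq \<in> offdiag_pairs N. ?val pq = xy}. c (ys ! fst pq) (ys ! snd pq))"
    using sum.group[OF finite _ subset_UNIV, where g="?val" and h="\<lambda>pq. c (ys ! fst pq) (ys ! snd pq)"]
    by (simp add: case_prod_beta')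
  also have "\<dots> = (\<Sum>xy\<in>UNIV. \<Sum>pq\<in>{pq \<in> offdiag_pairs N. ?val pq = xy}. c (fst xy) (snd xy))"
    by (intro sum.cong refl) auto
  also have "\<dots> = (\<Sum>xy\<in>UNIV. ereal (real (?card (fst xy) (snd xy))) * c (fst xy) (snd xy))"
    by (intro sum.cong refl) (simp add: ereal_sum_times[of _ "\<lambda>_. 1", simplified] prod_eq_iff conj_commute)
  also have "\<dots> = (\<Sum>x\<in>UNIV. \<Sum>y\<in>UNIV. ereal (real (?card x y)) * c x y)"
    by (simp add: sum.cartesian_product case_prod_beta' flip: UNIV_Times_UNIV)
  finally show ?thesis by (simp only: card_offdiag_pairs_with_values[OF ys])
qed

lemma cost_sym_dirac_pair:
  fixes ys :: "'a::finite list" and c :: "'a \<Rightarrow> 'a \<Rightarrow> ereal"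
  assumes ys: "length ys = N" and N: "N \<ge> 1"
    and cN: "\<forall>xs. length xs = N \<longrightarrow> cN xs = (\<Sum>(i, j)\<in>{(i, j). i < j \<and> j < N}. c (xs ! i) (xs ! j))"
  shows "cost N cN (sym_dirac N ys) = (\<Sum>x\<in>UNIV. \<Sum>y\<in>UNIV. ereal ((real N)^2 / 2 * empirical N ys x *
     empirical N ys y - (if x = y then real N / 2 * empirical N ys x else 0)) * c x y)"
proof -
  have coeff: "(1/2) * (real (count_list ys x) * real (count_list ys y) - (if x = y then real (count_list ys x) else 0))
     = (real N)^2 / 2 * empirical N ys x * empirical N ys y - (if x = y then real N / 2 * empirical N ys x else 0)"
    for x y using N by (simp add: empirical_def field_simps power2_eq_square)
  have "cost N cN (sym_dirac N ys) = (\<Sum>x\<in>UNIV. \<Sum>y\<in>UNIV. ereal (1/2) * (ereal (real (count_list ys x) *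
      real (count_list ys y) - (if x = y then real (count_list ys x) else 0)) * c x y))"
    by (simp add: cost_sym_dirac_pair_cost[OF ys cN] sum_offdiag_pairs_by_values[OF ys] ereal_times_sum)
  also have "\<dots> = (\<Sum>x\<in>UNIV. \<Sum>y\<in>UNIV. ereal ((1/2) * (real (count_list ys x) * real (count_list ys y)
      - (if x = y then real (count_list ys x) else 0))) * c x y)"
    by (simp only: times_ereal.simps(1)[symmetric] mult.assoc)
  finally show ?thesis by (simp only: coeff)
qed

lemma sorted_eq_if_count_list_eq:
  assumes "sorted xs" "sorted ys" "\<And>a. count_list xs a = count_list ys a"
  shows "xs = ys"
proof -
  have "mset xs = mset ys" using assms(3) by (simp add: multiset_eq_iff count_mset)
  then show ?thesis using properties_for_sort sorted_sort_id assms(1,2) by metis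
qed

lemma psi_eq_sym_dirac:
  fixes \<Lambda> :: "'a::{finite,linorder} \<Rightarrow> real"
  assumes \<Lambda>: "prob_1N N \<Lambda>" and N: "N \<ge> 1"
  shows "\<exists>ys. length ys = N \<and> empirical N ys = \<Lambda> \<and> psi N \<Lambda> = sym_dirac N ys"
proof -
  have prob: "is_prob \<Lambda>" and int: "\<And>a. real N * \<Lambda> a \<in> \<int>" using \<Lambda> by (auto simp: prob_1N_def)
  define n where "n a = nat \<lfloor>real N * \<Lambda> a\<rfloor>" for a
  have n: "real (n a) = real N * \<Lambda> a" for a
    using int[of a] prob by (auto simp: n_def is_prob_def elim!: Ints_cases)
  define ys where "ys = sorted_list_of_multiset (\<Sum>a\<in>UNIV. replicate_mset (n a) a)"
  have count: "count_list ys a = n a" for a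
    by (simp add: ys_def count_sum flip: count_mset)
  have P: "sorted ys \<and> (\<forall>a. real (count_list ys a) = real N * \<Lambda> a)"
    using count n by (simp add: ys_def)
  have "(THE ys. sorted ys \<and> (\<forall>a. real (count_list ys a) = real N * \<Lambda> a)) = ys"
  proof (rule the_equality)
    show "sorted ys \<and> (\<forall>a. real (count_list ys a) = real N * \<Lambda> a)" by (rule P)
    fix zs assume zs: "sorted zs \<and> (\<forall>a. real (count_list zs a) = real N * \<Lambda> a)"
    have "count_list zs a = count_list ys a" for a
      by (rule of_nat_eq_iff[where 'a=real, THEN iffD1]) (use zs P in simp)
    then show "zs = ys" using zs P sorted_eq_if_count_list_eq by blast
  qed
  then have "psi N \<Lambda> = sym_dirac N ys" by (simp add: psi_def sym_dirac_def)
  moreover have "length ys = N"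
  proof -
    have "real (length ys) = (\<Sum>a\<in>UNIV. real (count_list ys a))"
      using sum_count_set[of ys UNIV] by (simp flip: of_nat_sum)
    also have "\<dots> = real N * (\<Sum>a\<in>UNIV. \<Lambda> a)" by (simp add: count n sum_distrib_left)
    also have "\<dots> = real N" using prob by (simp add: is_prob_def)
    finally show ?thesis by simp
  qed
  moreover have "empirical N ys = \<Lambda>" using N by (auto simp: empirical_def count n)
  ultimately show ?thesis by auto
qed

lemma red_adm_empirical:
  fixes \<alpha> :: "'a::finite \<Rightarrow> real"
  assumes N: "N \<ge> 1" and "\<forall>\<nu>. \<alpha> \<nu> \<ge> 0" and ys: "\<forall>\<nu>. length (ys \<nu>) = N"
    and "\<forall>a. (\<Sum>\<nu>\<in>UNIV. \<alpha> \<nu> * empirical N (ys \<nu>) a) = lam a"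
  shows "red_adm N lam \<alpha> (\<lambda>\<nu>. empirical N (ys \<nu>))"
proof -
  have "prob_1N N (empirical N (ys \<nu>))" for \<nu>
    using ys N sum_empirical[of "ys \<nu>" N] by (auto simp: prob_1N_def is_prob_def empirical_def)
  then show ?thesis using assms by (simp add: red_adm_def)
qed

lemma cost_sum_sym_dirac_pair:
  fixes \<alpha> :: "'a::finite \<Rightarrow> real" and ys :: "'a \<Rightarrow> 'a list"
  assumes N: "N \<ge> 1" and \<alpha>: "\<forall>\<nu>. \<alpha> \<nu> \<ge> 0" and ys: "\<forall>\<nu>. length (ys \<nu>) = N"
    and cN: "\<forall>xs. length xs = N \<longrightarrow> cN xs = (\<Sum>(i, j)\<in>{(i, j). i < j \<and> j < N}. c (xs ! i) (xs ! j))"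
  shows "cost N cN (\<lambda>xs. \<Sum>\<nu>\<in>UNIV. \<alpha> \<nu> * sym_dirac N (ys \<nu>) xs) = I_red N c \<alpha> (\<lambda>\<nu>. empirical N (ys \<nu>))"
proof -
  have "cost N cN (\<lambda>xs. \<Sum>\<nu>\<in>UNIV. \<alpha> \<nu> * sym_dirac N (ys \<nu>) xs) =
      (\<Sum>\<nu>\<in>UNIV. ereal (\<alpha> \<nu>) * cost N cN (sym_dirac N (ys \<nu>)))"
    by (rule cost_sum) (use \<alpha> sym_dirac_nonneg in auto)
  then show ?thesis using ys by (simp add: I_red_def cost_sym_dirac_pair[OF _ N cN])
qed

lemma reduced_state_kant_adm_cost:
  fixes lam :: "'a::{finite,linorder} \<Rightarrow> real"
  assumes N: "N \<ge> 1" and lam_prob: "is_prob lam" and adm: "red_adm N lam \<alpha> \<Lambda>"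
    and cN: "\<forall>xs. length xs = N \<longrightarrow> cN xs = (\<Sum>(i, j)\<in>{(i, j). i < j \<and> j < N}. c (xs ! i) (xs ! j))"
  shows "kant_adm N lam (\<lambda>xs. \<Sum>\<nu>\<in>UNIV. \<alpha> \<nu> * psi N (\<Lambda> \<nu>) xs)"
    and "cost N cN (\<lambda>xs. \<Sum>\<nu>\<in>UNIV. \<alpha> \<nu> * psi N (\<Lambda> \<nu>) xs) = I_red N c \<alpha> \<Lambda>"
proof -
  have \<alpha>: "\<forall>\<nu>. \<alpha> \<nu> \<ge> 0" and lam: "\<And>a. (\<Sum>\<nu>\<in>UNIV. \<alpha> \<nu> * \<Lambda> \<nu> a) = lam a"
    using adm by (auto simp: red_adm_def)
  have "\<forall>\<nu>. \<exists>ys. length ys = N \<and> empirical N ys = \<Lambda> \<nu> \<and> psi N (\<Lambda> \<nu>) = sym_dirac N ys"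
    using psi_eq_sym_dirac[OF _ N] adm unfolding red_adm_def by blast
  then obtain ys where ys: "\<forall>\<nu>. length (ys \<nu>) = N" "\<forall>\<nu>. empirical N (ys \<nu>) = \<Lambda> \<nu>"
    "\<forall>\<nu>. psi N (\<Lambda> \<nu>) = sym_dirac N (ys \<nu>)"
    by metis
  then have \<Lambda>: "\<Lambda> = (\<lambda>\<nu>. empirical N (ys \<nu>))" by auto
  have \<gamma>: "(\<lambda>xs. \<Sum>\<nu>\<in>UNIV. \<alpha> \<nu> * psi N (\<Lambda> \<nu>) xs) = (\<lambda>xs. \<Sum>\<nu>\<in>UNIV. \<alpha> \<nu> * sym_dirac N (ys \<nu>) xs)"
    using ys by simp
  show "kant_adm N lam (\<lambda>xs. \<Sum>\<nu>\<in>UNIV. \<alpha> \<nu> * psi N (\<Lambda> \<nu>) xs)"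
    unfolding \<gamma> by (rule kant_adm_sum_sym_dirac) (use \<alpha> ys N lam lam_prob in auto)
  show "cost N cN (\<lambda>xs. \<Sum>\<nu>\<in>UNIV. \<alpha> \<nu> * psi N (\<Lambda> \<nu>) xs) = I_red N c \<alpha> \<Lambda>"
    unfolding \<gamma> using cost_sum_sym_dirac_pair[OF N \<alpha> ys(1) cN] by (simp only: \<Lambda>)
qed

lemma reduced_problem_solves_kantorovich:
  fixes lam :: "'a::{finite,linorder} \<Rightarrow> real" and \<gamma>0 :: "'a list \<Rightarrow> real"
  assumes N: "N \<ge> 1" and lam_prob: "is_prob lam"
    and cN: "\<forall>xs. length xs = N \<longrightarrow> cN xs = (\<Sum>(i, j)\<in>{(i, j). i < j \<and> j < N}. c (xs ! i) (xs ! j))"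
    and min0: "kant_min N cN lam \<gamma>0" and adm0: "red_adm N lam \<alpha>0 \<Lambda>0"
    and cost0: "cost N cN \<gamma>0 = I_red N c \<alpha>0 \<Lambda>0"
  shows "red_min N c lam \<alpha>0 \<Lambda>0"
    and "\<forall>\<gamma>. kant_min N cN lam \<gamma> \<longrightarrow> cost N cN \<gamma> = I_red N c \<alpha>0 \<Lambda>0"
    and "\<forall>\<alpha> \<Lambda>. red_min N c lam \<alpha> \<Lambda> \<longrightarrow> kant_min N cN lam (\<lambda>xs. \<Sum>\<nu>\<in>UNIV. \<alpha> \<nu> * psi N (\<Lambda> \<nu>) xs)"
proof -
  note reduced = reduced_state_kant_adm_cost[OF N lam_prob _ cN]
  have le0: "cost N cN \<gamma>0 \<le> cost N cN \<gamma>" if "kant_adm N lam \<gamma>" for \<gamma>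
    using min0 that by (simp add: kant_min_def)
  show "red_min N c lam \<alpha>0 \<Lambda>0"
    unfolding red_min_def
  proof (intro conjI allI impI adm0)
    fix \<alpha> \<Lambda> assume "red_adm N lam \<alpha> \<Lambda>"
    then show "I_red N c \<alpha>0 \<Lambda>0 \<le> I_red N c \<alpha> \<Lambda>"
      using le0[OF reduced(1)] reduced(2) cost0 by metis
  qed
  show "\<forall>\<gamma>. kant_min N cN lam \<gamma> \<longrightarrow> cost N cN \<gamma> = I_red N c \<alpha>0 \<Lambda>0"
  proof (intro allI impI)
    fix \<gamma> assume "kant_min N cN lam \<gamma>"
    then have "cost N cN \<gamma> \<le> cost N cN \<gamma>0" "cost N cN \<gamma>0 \<le> cost N cN \<gamma>"
      using min0 le0 by (auto simp: kant_min_def)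
    then show "cost N cN \<gamma> = I_red N c \<alpha>0 \<Lambda>0" using cost0 by simp
  qed
  show "\<forall>\<alpha> \<Lambda>. red_min N c lam \<alpha> \<Lambda> \<longrightarrow> kant_min N cN lam (\<lambda>xs. \<Sum>\<nu>\<in>UNIV. \<alpha> \<nu> * psi N (\<Lambda> \<nu>) xs)"
  proof (intro allI impI)
    fix \<alpha> \<Lambda> assume "red_min N c lam \<alpha> \<Lambda>"
    then have adm: "red_adm N lam \<alpha> \<Lambda>" and le: "I_red N c \<alpha> \<Lambda> \<le> cost N cN \<gamma>0"
      using adm0 cost0 by (auto simp: red_min_def)
    have "cost N cN (\<lambda>xs. \<Sum>\<nu>\<in>UNIV. \<alpha> \<nu> * psi N (\<Lambda> \<nu>) xs) \<le> cost N cN \<gamma>" if "kant_adm N lam \<gamma>" for \<gamma>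
      using reduced(2)[OF adm] le le0[OF that] by (metis order.trans)
    then show "kant_min N cN lam (\<lambda>xs. \<Sum>\<nu>\<in>UNIV. \<alpha> \<nu> * psi N (\<Lambda> \<nu>) xs)"
      using reduced(1)[OF adm] by (simp add: kant_min_def)
  qed
qed

theorem theorem5p3:
  fixes N :: nat
    and cN :: "'a::{finite,linorder} list \<Rightarrow> ereal"
    and c :: "'a \<Rightarrow> 'a \<Rightarrow> ereal"
    and lam :: "'a \<Rightarrow> real"
  assumes N2: "N \<ge> 2"
    and cN_no_minf: "\<forall>xs. cN xs \<noteq> -\<infinity>"
    and lam_prob: "is_prob lam"
  shows "(\<exists>\<gamma>. SAE N lam \<gamma> \<and> kant_min N cN lam \<gamma> \<and>
            ((\<forall>\<sigma> xs. \<sigma> permutes {0..<N} \<and> length xs = N \<longrightarrow> cN (perm_config \<sigma> xs) = cN xs) \<longrightarrow>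
              (\<forall>\<gamma>'. is_prob_N N \<gamma>' \<and> (\<forall>k<N. marg N k \<gamma>' = lam) \<longrightarrow>
                     cost N cN \<gamma> \<le> cost N cN \<gamma>')))
       \<and> (((\<forall>x y. c x y \<noteq> -\<infinity>) \<and>
            (\<forall>xs. length xs = N \<longrightarrow>
                  cN xs = (\<Sum>(i, j)\<in>{(i, j). i < j \<and> j < N}. c (xs ! i) (xs ! j)))) \<longrightarrow>
          (\<exists>\<alpha> \<Lambda>. red_min N c lam \<alpha> \<Lambda> \<and>
                  (\<forall>\<gamma>. kant_min N cN lam \<gamma> \<longrightarrow> cost N cN \<gamma> = I_red N c \<alpha> \<Lambda>))
          \<and> (\<forall>\<alpha> \<Lambda>. red_min N c lam \<alpha> \<Lambda> \<longrightarrow>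
                  kant_min N cN lam (\<lambda>xs. \<Sum>\<nu>\<in>UNIV. \<alpha> \<nu> * psi N (\<Lambda> \<nu>) xs)))"
proof -
  have N: "N \<ge> 1" using N2 by simp
  obtain \<alpha> :: "'a \<Rightarrow> real" and ys where \<alpha>: "\<forall>\<nu>. \<alpha> \<nu> \<ge> 0" and ys: "\<forall>\<nu>. length (ys \<nu>) = N"
    and lam: "\<forall>a. (\<Sum>\<nu>\<in>UNIV. \<alpha> \<nu> * empirical N (ys \<nu>) a) = lam a"
    and min: "kant_min N cN lam (\<lambda>xs. \<Sum>\<nu>\<in>UNIV. \<alpha> \<nu> * sym_dirac N (ys \<nu>) xs)"
    using exists_kant_min_sum_sym_dirac[OF N _ lam_prob] cN_no_minf by blast
  define \<gamma> where "\<gamma> = (\<lambda>xs. \<Sum>\<nu>\<in>UNIV. \<alpha> \<nu> * sym_dirac N (ys \<nu>) xs)"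
  have SAE: "SAE N lam \<gamma>" unfolding \<gamma>_def by (rule SAE_sum_sym_dirac[OF \<alpha> ys lam])
  have symmetric: "cost N cN \<gamma> \<le> cost N cN \<gamma>'"
    if "\<forall>\<sigma> xs. \<sigma> permutes {0..<N} \<and> length xs = N \<longrightarrow> cN (perm_config \<sigma> xs) = cN xs"
      and "is_prob_N N \<gamma>' \<and> (\<forall>k<N. marg N k \<gamma>' = lam)" for \<gamma>'
    using kant_min_le_cost_all_marginals[OF min[folded \<gamma>_def] N lam_prob] that by blast
  have pair: "(\<exists>\<alpha> \<Lambda>. red_min N c lam \<alpha> \<Lambda> \<and> (\<forall>\<gamma>. kant_min N cN lam \<gamma> \<longrightarrow> cost N cN \<gamma> = I_red N c \<alpha> \<Lambda>))
      \<and> (\<forall>\<alpha> \<Lambda>. red_min N c lam \<alpha> \<Lambda> \<longrightarrow> kant_min N cN lam (\<lambda>xs. \<Sum>\<nu>\<in>UNIV. \<alpha> \<nu> * psi N (\<Lambda> \<nu>) xs))"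
    if cN: "\<forall>xs. length xs = N \<longrightarrow> cN xs = (\<Sum>(i, j)\<in>{(i, j). i < j \<and> j < N}. c (xs ! i) (xs ! j))"
    using reduced_problem_solves_kantorovich[OF N lam_prob cN min red_adm_empirical[OF N \<alpha> ys lam]
        cost_sum_sym_dirac_pair[OF N \<alpha> ys cN]]
    by blast
  show ?thesis
    by (intro conjI impI exI[of _ \<gamma>] SAE min[folded \<gamma>_def] allI symmetric pair) auto
qed

end
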